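(* Let $\mathcal{M}\subset\mathbb{R}^K$ be a submanifold with geodesic distance $d_{\mathcal{M}}$ and $\mu$ a Borel probability measure on $\mathcal{M}$. Let $p_2\in(0,0.5]$ and let $\mathcal{V}=\{X_1,\dots,X_n\}$, $n\ge4$, be an i.i.d. sample from $\mu$. Then with probability at least $1-p_2$, for all $i\in\{1,\dots,n\}$ and all $r>0$, $$\Big|\sqrt{\eta_1(B_{\mathcal{M}}(X_i,r))}-\sqrt{\mu(B_{\mathcal{M}}(X_i,r))}\Big|\le2\sqrt{\frac{-\ln\big(\frac{p_2}{4n^2}\big)}{n}}.$$
   Context: $B_{\mathcal{M}}(x,r)=\{y\in\mathcal{M}:d_{\mathcal{M}}(x,y)<r\}$; $\eta_1(W)=\frac1n\sum_{j=1}^n\mathbf{1}_{X_j\in W}$ is the empirical measure of the sample. *)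

theory Defs
  imports "HOL-Analysis.Analysis" "HOL-Probability.Probability"
begin

definition C1_on :: "'a::euclidean_space set \<Rightarrow> ('a \<Rightarrow> 'b::euclidean_space) \<Rightarrow> bool" where
  "C1_on U f \<longleftrightarrow> (\<exists>D :: 'a \<Rightarrow> 'a \<Rightarrow>\<^sub>L 'b.
      (\<forall>y\<in>U. (f has_derivative blinfun_apply (D y)) (at y)) \<and> continuous_on U D)"

definition submanifold :: "'a::euclidean_space set \<Rightarrow> bool" where
  "submanifold M \<longleftrightarrow> (\<exists>k::nat. \<forall>x\<in>M. \<exists>U V (\<phi>::'a \<Rightarrow> 'a) \<psi> S.
      open U \<and> x \<in> U \<and> open V \<and> subspace S \<and> dim S = k \<and>
      \<phi> ` U = V \<and> (\<forall>y\<in>U. \<psi> (\<phi> y) = y) \<and> (\<forall>z\<in>V. \<phi> (\<psi> z) = z) \<and>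
      C1_on U \<phi> \<and> C1_on V \<psi> \<and> \<phi> ` (U \<inter> M) = V \<inter> S)"

definition path_len :: "(real \<Rightarrow> 'a::real_normed_vector) \<Rightarrow> ereal" where
  "path_len g = (SUP ts \<in> {ts. sorted ts \<and> set ts \<subseteq> {0..1}}.
      ereal (\<Sum>i<length ts - 1. dist (g (ts ! i)) (g (ts ! Suc i))))"

definition geodesic_dist :: "'a::real_normed_vector set \<Rightarrow> 'a \<Rightarrow> 'a \<Rightarrow> ereal" where
  "geodesic_dist M x y = (INF g \<in> {g. path g \<and> path_image g \<subseteq> M \<and> pathstart g = x \<and> pathfinish g = y}.
      path_len g)"

definition geodesic_ball :: "'a::real_normed_vector set \<Rightarrow> 'a \<Rightarrow> real \<Rightarrow> 'a set" where
  "geodesic_ball M x r = {y \<in> M. geodesic_dist M x y < ereal r}"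

definition emp_measure :: "nat \<Rightarrow> (nat \<Rightarrow> 'w \<Rightarrow> 'a) \<Rightarrow> 'w \<Rightarrow> 'a set \<Rightarrow> real" where
  "emp_measure n X \<omega> W = real (card {j \<in> {..<n}. X j \<omega> \<in> W}) / real n"

end

(*
  For a fixed centre x the geodesic balls B(x, r) increase with r and are open from the left in r.
  For a single measurable set C, the number of sample points in C is binomial, and Chernoff's
  bound with the optimal exponent shows that the empirical frequency deviates from mu(C) by more
  than t on the square-root scale with probability at most 2 exp(-m t^2), whatever mu(C) is.
  Sandwiching every ball between the union of the balls of measure < k/K and the intersection of
  the balls of measure >= k/K, for a suitable grid value k/K, makes this uniform in r at the
  price of sqrt(1/K) and of 2(K + 1) Chernoff bounds. Conditionally on X_i the other n - 1 points
  are an i.i.d. sample, so the bound applies to the balls around X_i; X_i itself adds one point,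
  which costs sqrt(1/n). A union bound over i with K = n gives the theorem. Geodesic balls are
  Borel because on a C^1 submanifold the geodesic distance is locally dominated, through a chart,
  by the Euclidean one, so that d_M < r defines a relatively open subset of M x M.
*)

theory Submission
  imports Defs
begin

section \<open>Length of paths and geodesic distance\<close>

fun polygon_length :: "(real \<Rightarrow> 'a::real_normed_vector) \<Rightarrow> real list \<Rightarrow> real" where
  "polygon_length g (a # b # ts) = dist (g a) (g b) + polygon_length g (b # ts)"
| "polygon_length g _ = 0"

lemma path_len_eq_SUP_polygon_length:
  "path_len g = (SUP ts \<in> {ts. sorted ts \<and> set ts \<subseteq> {0..1}}. ereal (polygon_length g ts))"
proof -
  have "(\<Sum>i<length ts - 1. dist (g (ts ! i)) (g (ts ! Suc i))) = polygon_length g ts" for ts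
    by (induction g ts rule: polygon_length.induct)
      (auto simp: sum.lessThan_Suc_shift simp del: sum.lessThan_Suc)
  then show ?thesis
    unfolding path_len_def by presburger
qed

lemma polygon_length_nonneg: "polygon_length g ts \<ge> 0"
  by (induction g ts rule: polygon_length.induct) auto

lemma polygon_length_cong:
  "(\<And>t. t \<in> set ts \<Longrightarrow> f t = h t) \<Longrightarrow> polygon_length f ts = polygon_length h ts"
  by (induction f ts rule: polygon_length.induct) auto

lemma polygon_length_map: "polygon_length g (map h ts) = polygon_length (g \<circ> h) ts"
  by (induction "g \<circ> h" ts rule: polygon_length.induct) auto

lemma polygon_length_le_path_len:
  "sorted ts \<Longrightarrow> set ts \<subseteq> {0..1} \<Longrightarrow> ereal (polygon_length g ts) \<le> path_len g"
  unfolding path_len_eq_SUP_polygon_length by (auto intro!: SUP_upper)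

lemma path_len_leI:
  "(\<And>ts. sorted ts \<Longrightarrow> set ts \<subseteq> {0..1} \<Longrightarrow> polygon_length g ts \<le> c) \<Longrightarrow> path_len g \<le> ereal c"
  unfolding path_len_eq_SUP_polygon_length by (auto intro!: SUP_least)

lemma path_len_nonneg: "path_len g \<ge> 0"
  using polygon_length_le_path_len[of "[]" g] by (simp add: zero_ereal_def)

lemma polygon_length_le_lipschitz:
  assumes "L-lipschitz_on {0..1} g"
  shows "sorted ts \<Longrightarrow> set ts \<subseteq> {0..1} \<Longrightarrow> ts \<noteq> [] \<Longrightarrow> polygon_length g ts \<le> L * (last ts - hd ts)"
proof (induction ts)
  case (Cons a ts)
  show ?case
  proof (cases ts)
    case (Cons b ts')
    with Cons.prems have "a \<le> b" "a \<in> {0..1}" "b \<in> {0..1}" by auto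
    then have "dist (g a) (g b) \<le> L * (b - a)"
      using lipschitz_onD[OF assms] by (fastforce simp: dist_real_def)
    moreover have "polygon_length g ts \<le> L * (last ts - hd ts)"
      using Cons.IH Cons.prems \<open>ts = b # ts'\<close> by auto
    ultimately show ?thesis using \<open>ts = b # ts'\<close> by (simp add: algebra_simps)
  qed simp
qed simp

lemma path_len_le_lipschitz:
  assumes "L-lipschitz_on {0..1} g"
  shows "path_len g \<le> ereal L"
proof (rule path_len_leI)
  fix ts :: "real list" assume ts: "sorted ts" "set ts \<subseteq> {0..1}"
  have "L \<ge> 0" using lipschitz_on_nonneg[OF assms] .
  show "polygon_length g ts \<le> L"
  proof (cases "ts = []")
    case False
    then have "last ts \<in> {0..1}" "hd ts \<in> {0..1}" using ts last_in_set hd_in_set by blast+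
    then have "L * (last ts - hd ts) \<le> L" using \<open>L \<ge> 0\<close> by (simp add: mult_left_le)
    then show ?thesis using polygon_length_le_lipschitz[OF assms ts False] by simp
  qed (use \<open>L \<ge> 0\<close> in simp)
qed

lemma polygon_length_split:
  "sorted ts \<Longrightarrow> polygon_length g ts
     \<le> polygon_length g (filter (\<lambda>t. t \<le> c) ts @ [c]) + polygon_length g (c # filter (\<lambda>t. \<not> t \<le> c) ts)"
proof (induction ts)
  case (Cons a ts)
  have ts: "sorted ts" "\<forall>x\<in>set ts. a \<le> x" using Cons.prems by auto
  show ?case
  proof (cases "a \<le> c")
    case True
    show ?thesis
    proof (cases ts)
      case Nil
      then show ?thesis using True by (simp add: polygon_length_nonneg)
    next
      case (Cons b ts')
      show ?thesis
      proof (cases "b \<le> c")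
        case True
        then show ?thesis using Cons.IH ts \<open>a \<le> c\<close> \<open>ts = b # ts'\<close> by simp
      next
        case False
        then have "filter (\<lambda>t. t \<le> c) ts' = []" "filter (\<lambda>t. \<not> t \<le> c) ts' = ts'"
          using ts \<open>ts = b # ts'\<close> by (auto simp: filter_empty_conv filter_id_conv)
        moreover have "dist (g a) (g b) \<le> dist (g a) (g c) + dist (g c) (g b)" by (rule dist_triangle)
        ultimately show ?thesis using \<open>a \<le> c\<close> False \<open>ts = b # ts'\<close> by simp
      qed
    qed
  next
    case False
    then have "filter (\<lambda>t. t \<le> c) (a # ts) = []" "filter (\<lambda>t. \<not> t \<le> c) (a # ts) = a # ts"
      using ts by (auto simp: filter_empty_conv filter_id_conv simp del: filter.simps)
    then show ?thesis by (simp add: zero_le_dist)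
  qed
qed simp

lemma path_len_joinpaths_le:
  assumes "g1 1 = g2 0"
  shows "path_len (g1 +++ g2) \<le> path_len g1 + path_len g2"
  unfolding path_len_eq_SUP_polygon_length[of "g1 +++ g2"]
proof (rule SUP_least, clarify)
  fix ts :: "real list" assume ts: "sorted ts" "set ts \<subseteq> {0..1}"
  define ts1 where "ts1 = filter (\<lambda>t. t \<le> 1/2) ts @ [1/2]"
  define ts2 where "ts2 = (1/2::real) # filter (\<lambda>t. \<not> t \<le> 1/2) ts"
  have "polygon_length (g1 +++ g2) ts \<le> polygon_length (g1 +++ g2) ts1 + polygon_length (g1 +++ g2) ts2"
    unfolding ts1_def ts2_def by (rule polygon_length_split[OF ts(1)])
  also have "polygon_length (g1 +++ g2) ts1 = polygon_length g1 (map (\<lambda>t. 2 * t) ts1)"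
    unfolding polygon_length_map by (rule polygon_length_cong) (auto simp: ts1_def joinpaths_def)
  also have "polygon_length (g1 +++ g2) ts2 = polygon_length g2 (map (\<lambda>t. 2 * t - 1) ts2)"
    unfolding polygon_length_map
  proof (rule polygon_length_cong)
    fix t assume "t \<in> set ts2"
    then consider "t = 1/2" | "t > 1/2" by (force simp: ts2_def)
    then show "(g1 +++ g2) t = (g2 \<circ> (\<lambda>t. 2 * t - 1)) t"
    proof cases
      case 1
      show ?thesis unfolding 1 using assms by (simp add: joinpaths_def)
    qed (simp add: joinpaths_def)
  qed
  finally have "ereal (polygon_length (g1 +++ g2) ts)
      \<le> ereal (polygon_length g1 (map (\<lambda>t. 2 * t) ts1)) + ereal (polygon_length g2 (map (\<lambda>t. 2 * t - 1) ts2))"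
    by simp
  also have "\<dots> \<le> path_len g1 + path_len g2"
    using ts by (intro add_mono polygon_length_le_path_len)
      (auto simp: ts1_def ts2_def sorted_append sorted_map intro: sorted_wrt_filter)
  finally show "ereal (polygon_length (g1 +++ g2) ts) \<le> path_len g1 + path_len g2" .
qed

lemma geodesic_dist_nonneg: "geodesic_dist M x y \<ge> 0"
  unfolding geodesic_dist_def by (rule INF_greatest) (rule path_len_nonneg)

lemma geodesic_dist_le_path_len:
  "path g \<Longrightarrow> path_image g \<subseteq> M \<Longrightarrow> pathstart g = x \<Longrightarrow> pathfinish g = y
    \<Longrightarrow> geodesic_dist M x y \<le> path_len g"
  unfolding geodesic_dist_def by (intro INF_lower) auto

lemma geodesic_dist_less_erealE:
  assumes "geodesic_dist M x y < ereal r"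
  obtains d where "geodesic_dist M x y = ereal d" "0 \<le> d" "d < r"
  using assms geodesic_dist_nonneg[of M x y] by (cases "geodesic_dist M x y") auto

lemma geodesic_dist_triangle:
  "geodesic_dist M x z \<le> geodesic_dist M x y + geodesic_dist M y z"
proof -
  define P1 where "P1 = {g. path g \<and> path_image g \<subseteq> M \<and> pathstart g = x \<and> pathfinish g = y}"
  define P2 where "P2 = {g. path g \<and> path_image g \<subseteq> M \<and> pathstart g = y \<and> pathfinish g = z}"
  have d1: "geodesic_dist M x y = (INF g\<in>P1. path_len g)"
    and d2: "geodesic_dist M y z = (INF g\<in>P2. path_len g)"
    unfolding P1_def P2_def geodesic_dist_def by simp_all
  have fin: "geodesic_dist M x y \<noteq> -\<infinity>" "geodesic_dist M y z \<noteq> -\<infinity>"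
    using geodesic_dist_nonneg[of M x y] geodesic_dist_nonneg[of M y z] by auto
  show ?thesis
  proof (cases "P1 = {} \<or> P2 = {}")
    case True
    then have "geodesic_dist M x y = \<infinity> \<or> geodesic_dist M y z = \<infinity>"
      unfolding d1 d2 by (auto simp: top_ereal_def)
    then show ?thesis using fin by auto
  next
    case False
    have "geodesic_dist M x z \<le> (INF g1\<in>P1. INF g2\<in>P2. path_len g1 + path_len g2)"
    proof (intro INF_greatest)
      fix g1 g2 assume g1: "g1 \<in> P1" and g2: "g2 \<in> P2"
      have "geodesic_dist M x z \<le> path_len (g1 +++ g2)"
        using g1 g2 unfolding P1_def P2_def
        by (intro geodesic_dist_le_path_len) (auto simp: path_image_join)
      also have "\<dots> \<le> path_len g1 + path_len g2"
        using g1 g2 unfolding P1_def P2_def pathstart_def pathfinish_def by (intro path_len_joinpaths_le) auto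
      finally show "geodesic_dist M x z \<le> path_len g1 + path_len g2" .
    qed
    also have "\<dots> = (INF g1\<in>P1. path_len g1 + geodesic_dist M y z)"
      unfolding d2 using False path_len_nonneg
      by (intro INF_cong refl INF_ereal_add_right) (auto simp: ereal_infty_less_eq2)
    also have "\<dots> = geodesic_dist M x y + geodesic_dist M y z"
      unfolding d1 using False fin(2) path_len_nonneg by (intro INF_ereal_add_left) auto
    finally show ?thesis .
  qed
qed

lemma geodesic_dist_refl: "x \<in> M \<Longrightarrow> geodesic_dist M x x = 0"
proof -
  assume "x \<in> M"
  have "0-lipschitz_on {0..1} (\<lambda>t::real. x)" by (rule lipschitz_onI) auto
  then have "path_len (\<lambda>t. x) \<le> 0" using path_len_le_lipschitz by (simp add: zero_ereal_def)
  moreover have "geodesic_dist M x x \<le> path_len (\<lambda>t. x)"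
    using \<open>x \<in> M\<close> by (intro geodesic_dist_le_path_len) (auto simp: path_def pathstart_def pathfinish_def path_image_def)
  ultimately show ?thesis using geodesic_dist_nonneg[of M x x] by simp
qed

lemma geodesic_dist_lipschitz_image_le:
  fixes \<psi> :: "'a::real_normed_vector \<Rightarrow> 'b::real_normed_vector"
  assumes lip: "B-lipschitz_on T \<psi>" and "convex T" "a \<in> T" "b \<in> T" and "\<psi> ` T \<subseteq> M"
  shows "geodesic_dist M (\<psi> a) (\<psi> b) \<le> ereal (B * dist a b)"
proof -
  have seg: "linepath a b ` {0..1} \<subseteq> T"
    using closed_segment_subset[OF assms(3,4,2)] path_image_linepath[of a b] by (simp add: path_image_def)
  have "(dist a b)-lipschitz_on {0..1} (linepath a b)"
  proof (rule lipschitz_onI)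
    fix s t :: real
    have "linepath a b s - linepath a b t = (s - t) *\<^sub>R (b - a)"
      by (simp add: linepath_def algebra_simps)
    then show "dist (linepath a b s) (linepath a b t) \<le> dist a b * dist s t"
      by (simp add: dist_norm dist_real_def norm_minus_commute)
  qed simp
  then have "(B * dist a b)-lipschitz_on {0..1} (\<psi> \<circ> linepath a b)"
    using lipschitz_on_subset[OF lip seg] by (rule lipschitz_on_compose)
  then have "path (\<psi> \<circ> linepath a b)"
    unfolding path_def by (rule lipschitz_on_continuous_on)
  moreover have "path_image (\<psi> \<circ> linepath a b) \<subseteq> M"
    using seg assms(5) by (auto simp: path_image_def)
  ultimately have "geodesic_dist M (\<psi> a) (\<psi> b) \<le> path_len (\<psi> \<circ> linepath a b)"
    by (intro geodesic_dist_le_path_len) (auto simp: pathstart_compose pathfinish_compose)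
  also have "\<dots> \<le> ereal (B * dist a b)"
    by (rule path_len_le_lipschitz) fact
  finally show ?thesis .
qed

section \<open>Geodesic balls in a submanifold are Borel\<close>

lemma submanifold_chartE:
  fixes M :: "'a::euclidean_space set"
  assumes "submanifold M" "x \<in> M"
  obtains U V S and \<phi> \<psi> :: "'a \<Rightarrow> 'a" where "open U" "x \<in> U" "open V" "subspace S" "\<phi> ` U = V"
    "\<forall>y\<in>U. \<psi> (\<phi> y) = y" "C1_on U \<phi>" "C1_on V \<psi>" "\<phi> ` (U \<inter> M) = V \<inter> S"
proof -
  obtain k where "\<forall>x\<in>M. \<exists>U V (\<phi>::'a \<Rightarrow> 'a) \<psi> S.
      open U \<and> x \<in> U \<and> open V \<and> subspace S \<and> dim S = k \<and>
      \<phi> ` U = V \<and> (\<forall>y\<in>U. \<psi> (\<phi> y) = y) \<and> (\<forall>z\<in>V. \<phi> (\<psi> z) = z) \<and>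
      C1_on U \<phi> \<and> C1_on V \<psi> \<and> \<phi> ` (U \<inter> M) = V \<inter> S"
    using assms(1) unfolding submanifold_def by (elim exE) (rule that)
  from this[rule_format, OF assms(2)] show ?thesis
    by (elim exE conjE) (rule that)
qed

text \<open>A chart straightens \<open>M\<close> near \<open>x\<close> into a linear subspace; its inverse, restricted to a
  small convex neighbourhood of \<open>\<phi> x\<close> in that subspace, is a Lipschitz parametrization of \<open>M\<close>.\<close>

lemma submanifold_lipschitz_chart:
  fixes M :: "'a::euclidean_space set"
  assumes "submanifold M" "x \<in> M"
  obtains U T and \<phi> \<psi> :: "'a \<Rightarrow> 'a" and B \<delta> where "open U" "x \<in> U" "isCont \<phi> x" "\<forall>y\<in>U. \<psi> (\<phi> y) = y"
    "convex T" "\<psi> ` T \<subseteq> M" "B-lipschitz_on T \<psi>" "\<delta> > 0"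
    "\<forall>y\<in>U \<inter> M. dist (\<phi> y) (\<phi> x) \<le> \<delta> \<longrightarrow> \<phi> y \<in> T"
proof -
  obtain U V S and \<phi> \<psi> :: "'a \<Rightarrow> 'a" where
    U: "open U" "x \<in> U" and V: "open V" and S: "subspace S" and "\<phi> ` U = V"
    and \<psi>\<phi>: "\<forall>y\<in>U. \<psi> (\<phi> y) = y" and "C1_on U \<phi>" "C1_on V \<psi>" and img: "\<phi> ` (U \<inter> M) = V \<inter> S"
    by (rule submanifold_chartE[OF assms])
  from \<open>C1_on V \<psi>\<close> obtain D :: "'a \<Rightarrow> 'a \<Rightarrow>\<^sub>L 'a" where
    dD: "\<forall>y\<in>V. (\<psi> has_derivative blinfun_apply (D y)) (at y)" and "continuous_on V D"
    unfolding C1_on_def by blast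
  from \<open>C1_on U \<phi>\<close> obtain D' :: "'a \<Rightarrow> 'a \<Rightarrow>\<^sub>L 'a" where
    "\<forall>y\<in>U. (\<phi> has_derivative blinfun_apply (D' y)) (at y)"
    unfolding C1_on_def by blast
  then have "isCont \<phi> x" using U(2) has_derivative_continuous by blast
  have "\<phi> x \<in> V" using \<open>\<phi> ` U = V\<close> U(2) by blast
  then obtain \<delta> where \<delta>: "\<delta> > 0" "cball (\<phi> x) \<delta> \<subseteq> V" using V open_contains_cball by blast
  have "continuous_on (cball (\<phi> x) \<delta>) D" using \<open>continuous_on V D\<close> \<delta>(2) by (rule continuous_on_subset)
  then obtain B where B: "B \<ge> 0" "\<And>w. w \<in> cball (\<phi> x) \<delta> \<Longrightarrow> norm (D w) \<le> B"
    by (rule continuous_on_compact_bound[OF compact_cball]) blast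
  have "B-lipschitz_on (cball (\<phi> x) \<delta>) \<psi>"
  proof (rule bounded_derivative_imp_lipschitz[where f'="\<lambda>w. blinfun_apply (D w)"])
    show "(\<psi> has_derivative blinfun_apply (D w)) (at w within cball (\<phi> x) \<delta>)"
      if "w \<in> cball (\<phi> x) \<delta>" for w
      using dD subsetD[OF \<delta>(2) that] by (simp add: has_derivative_at_withinI)
    show "onorm (blinfun_apply (D w)) \<le> B" if "w \<in> cball (\<phi> x) \<delta>" for w
      using B(2)[OF that] by (simp add: norm_blinfun.rep_eq)
  qed (use B(1) in auto)
  then have lip: "B-lipschitz_on (cball (\<phi> x) \<delta> \<inter> S) \<psi>" by (rule lipschitz_on_subset) blast
  have into_M: "\<psi> ` (cball (\<phi> x) \<delta> \<inter> S) \<subseteq> M"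
  proof (rule image_subsetI)
    fix w assume "w \<in> cball (\<phi> x) \<delta> \<inter> S"
    then have "w \<in> \<phi> ` (U \<inter> M)" unfolding img using \<delta>(2) by blast
    then show "\<psi> w \<in> M" using \<psi>\<phi> by auto
  qed
  have "\<phi> ` (U \<inter> M) \<subseteq> S" unfolding img by blast
  then have onto: "\<forall>y\<in>U \<inter> M. dist (\<phi> y) (\<phi> x) \<le> \<delta> \<longrightarrow> \<phi> y \<in> cball (\<phi> x) \<delta> \<inter> S"
    by (auto simp: dist_commute)
  have "convex (cball (\<phi> x) \<delta> \<inter> S)"
    using S by (intro convex_Int convex_cball subspace_imp_convex)
  from that[OF U \<open>isCont \<phi> x\<close> \<psi>\<phi> this into_M lip \<delta>(1) onto] show ?thesis .
qed

lemma submanifold_geodesic_dist_small: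
  fixes M :: "'a::euclidean_space set"
  assumes "submanifold M" "x \<in> M" "\<eta> > 0"
  shows "\<exists>e>0. \<forall>y\<in>M. dist y x < e \<longrightarrow> geodesic_dist M x y < ereal \<eta> \<and> geodesic_dist M y x < ereal \<eta>"
proof -
  obtain U T and \<phi> \<psi> :: "'a \<Rightarrow> 'a" and B \<delta> where U: "open U" "x \<in> U" and "isCont \<phi> x" and \<psi>\<phi>: "\<forall>y\<in>U. \<psi> (\<phi> y) = y"
    and T: "convex T" "\<psi> ` T \<subseteq> M" and lip: "B-lipschitz_on T \<psi>" and "\<delta> > 0"
    and inT: "\<forall>y\<in>U \<inter> M. dist (\<phi> y) (\<phi> x) \<le> \<delta> \<longrightarrow> \<phi> y \<in> T"
    by (rule submanifold_lipschitz_chart[OF assms(1,2)])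
  have "B \<ge> 0" using lip by (rule lipschitz_on_nonneg)
  define \<eta>' where "\<eta>' = min \<delta> (\<eta> / (B + 1))"
  have "\<eta>' > 0" unfolding \<eta>'_def using \<open>\<delta> > 0\<close> \<open>\<eta> > 0\<close> \<open>B \<ge> 0\<close> by auto
  then obtain e1 where "e1 > 0" and e1: "\<forall>y. dist y x < e1 \<longrightarrow> dist (\<phi> y) (\<phi> x) < \<eta>'"
    using continuous_at_eps_delta[THEN iffD1, OF \<open>isCont \<phi> x\<close>] by blast
  obtain e2 where "e2 > 0" "ball x e2 \<subseteq> U" using U open_contains_ball by blast
  show ?thesis
  proof (intro exI[of _ "min e1 e2"] conjI ballI impI)
    show "min e1 e2 > 0" using \<open>e1 > 0\<close> \<open>e2 > 0\<close> by simp
    fix y assume "y \<in> M" and dist_y: "dist y x < min e1 e2"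
    then have "y \<in> ball x e2" by (simp add: dist_commute)
    then have "y \<in> U" using \<open>ball x e2 \<subseteq> U\<close> by blast
    have "dist (\<phi> y) (\<phi> x) < \<eta>'" using e1 dist_y by simp
    then have "dist (\<phi> y) (\<phi> x) \<le> \<delta>" unfolding \<eta>'_def by linarith
    then have "\<phi> y \<in> T" using inT \<open>y \<in> U\<close> \<open>y \<in> M\<close> by blast
    have "\<phi> x \<in> T" using inT U(2) assms(2) \<open>\<delta> > 0\<close> by simp
    have "B * dist (\<phi> y) (\<phi> x) \<le> (B + 1) * dist (\<phi> y) (\<phi> x)" by (simp add: distrib_right)
    also have "\<dots> < (B + 1) * (\<eta> / (B + 1))"
      using \<open>dist (\<phi> y) (\<phi> x) < \<eta>'\<close> \<open>B \<ge> 0\<close> unfolding \<eta>'_def by (intro mult_strict_left_mono) auto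
    finally have small: "B * dist (\<phi> y) (\<phi> x) < \<eta>" using \<open>B \<ge> 0\<close> by simp
    have "\<psi> (\<phi> x) = x" "\<psi> (\<phi> y) = y" using \<psi>\<phi> U(2) \<open>y \<in> U\<close> by auto
    then have "geodesic_dist M x y \<le> ereal (B * dist (\<phi> y) (\<phi> x))"
      "geodesic_dist M y x \<le> ereal (B * dist (\<phi> y) (\<phi> x))"
      using geodesic_dist_lipschitz_image_le[OF lip T(1) \<open>\<phi> x \<in> T\<close> \<open>\<phi> y \<in> T\<close> T(2)]
        geodesic_dist_lipschitz_image_le[OF lip T(1) \<open>\<phi> y \<in> T\<close> \<open>\<phi> x \<in> T\<close> T(2)]
      by (simp_all add: dist_commute)
    then show "geodesic_dist M x y < ereal \<eta>" "geodesic_dist M y x < ereal \<eta>"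
      using small by (auto intro: le_less_trans)
  qed
qed

definition geodesic_ball_rel :: "'a::real_normed_vector set \<Rightarrow> real \<Rightarrow> ('a \<times> 'a) set" where
  "geodesic_ball_rel M r = {p \<in> M \<times> M. geodesic_dist M (fst p) (snd p) < ereal r}"

lemma geodesic_ball_eq_section:
  "x \<in> M \<Longrightarrow> geodesic_ball M x r = Pair x -` geodesic_ball_rel M r"
  by (auto simp: geodesic_ball_def geodesic_ball_rel_def)

lemma geodesic_ball_rel_mono: "r \<le> r' \<Longrightarrow> geodesic_ball_rel M r \<subseteq> geodesic_ball_rel M r'"
  unfolding geodesic_ball_rel_def by (auto intro: less_le_trans)

lemma geodesic_ball_rel_left_open:
  assumes "p \<in> geodesic_ball_rel M r"
  shows "\<exists>s<r. p \<in> geodesic_ball_rel M s"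
proof -
  obtain d where "geodesic_dist M (fst p) (snd p) = ereal d" "d < r"
    using assms unfolding geodesic_ball_rel_def by (auto elim: geodesic_dist_less_erealE)
  then show ?thesis
    using assms unfolding geodesic_ball_rel_def by (intro exI[of _ "(d + r) / 2"]) auto
qed

lemma geodesic_ball_rel_refl: "x \<in> M \<Longrightarrow> r > 0 \<Longrightarrow> (x, x) \<in> geodesic_ball_rel M r"
  by (simp add: geodesic_ball_rel_def geodesic_dist_refl)

lemma openin_geodesic_ball_rel:
  fixes M :: "'a::euclidean_space set"
  assumes "submanifold M"
  shows "openin (top_of_set (M \<times> M)) (geodesic_ball_rel M r)"
  unfolding openin_euclidean_subtopology_iff
proof (intro conjI ballI)
  show "geodesic_ball_rel M r \<subseteq> M \<times> M" unfolding geodesic_ball_rel_def by blast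
  fix p assume "p \<in> geodesic_ball_rel M r"
  then obtain x z where p: "p = (x, z)" "x \<in> M" "z \<in> M" and "geodesic_dist M x z < ereal r"
    unfolding geodesic_ball_rel_def by auto
  then obtain d where d: "geodesic_dist M x z = ereal d" "d < r" by (elim geodesic_dist_less_erealE)
  define \<eta> where "\<eta> = (r - d) / 2"
  have "\<eta> > 0" using d by (simp add: \<eta>_def)
  obtain ex where "ex > 0" and ex: "\<forall>y\<in>M. dist y x < ex \<longrightarrow> geodesic_dist M y x < ereal \<eta>"
    using submanifold_geodesic_dist_small[OF assms \<open>x \<in> M\<close> \<open>\<eta> > 0\<close>] by blast
  obtain ez where "ez > 0" and ez: "\<forall>y\<in>M. dist y z < ez \<longrightarrow> geodesic_dist M z y < ereal \<eta>"
    using submanifold_geodesic_dist_small[OF assms \<open>z \<in> M\<close> \<open>\<eta> > 0\<close>] by blast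
  show "\<exists>e>0. \<forall>q\<in>M \<times> M. dist q p < e \<longrightarrow> q \<in> geodesic_ball_rel M r"
  proof (intro exI[of _ "min ex ez"] conjI ballI impI)
    show "min ex ez > 0" using \<open>ex > 0\<close> \<open>ez > 0\<close> by simp
    fix q assume "q \<in> M \<times> M" and "dist q p < min ex ez"
    then obtain x' z' where q: "q = (x', z')" "x' \<in> M" "z' \<in> M" by auto
    have "dist x' x < ex" "dist z' z < ez"
      using \<open>dist q p < min ex ez\<close> dist_fst_le[of q p] dist_snd_le[of q p] p q by auto
    then obtain a b where a: "geodesic_dist M x' x = ereal a" "a < \<eta>"
      and b: "geodesic_dist M z z' = ereal b" "b < \<eta>"
      using ex ez q by (meson geodesic_dist_less_erealE)
    have "geodesic_dist M x' z' \<le> geodesic_dist M x' x + geodesic_dist M x z'"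
      by (rule geodesic_dist_triangle)
    also have "\<dots> \<le> geodesic_dist M x' x + (geodesic_dist M x z + geodesic_dist M z z')"
      by (intro add_left_mono geodesic_dist_triangle)
    also have "\<dots> < ereal r" using a b d by (simp add: \<eta>_def)
    finally show "q \<in> geodesic_ball_rel M r" using q by (simp add: geodesic_ball_rel_def)
  qed
qed

lemma geodesic_ball_rel_in_sets:
  fixes M :: "'a::euclidean_space set"
  assumes "submanifold M" "space \<mu> = M" "sets \<mu> = sets (restrict_space borel M)"
  shows "geodesic_ball_rel M r \<in> sets (\<mu> \<Otimes>\<^sub>M \<mu>)"
proof -
  obtain T where "open T" and T: "geodesic_ball_rel M r = (M \<times> M) \<inter> T"
    using openin_geodesic_ball_rel[OF assms(1)] unfolding openin_open by blast
  have "(\<lambda>x. x) \<in> measurable (restrict_space borel M) borel"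
    by (intro measurable_restrict_space1) simp
  then have id: "(\<lambda>x. x) \<in> measurable \<mu> borel"
    by (subst measurable_cong_sets[OF assms(3) refl])
  have "(\<lambda>p. (fst p, snd p)) \<in> measurable (\<mu> \<Otimes>\<^sub>M \<mu>) (borel \<Otimes>\<^sub>M borel)"
    by (intro measurable_Pair measurable_compose[OF measurable_fst id] measurable_compose[OF measurable_snd id])
  then have "(\<lambda>p. p) \<in> measurable (\<mu> \<Otimes>\<^sub>M \<mu>) borel" by (simp add: borel_prod)
  then have "(\<lambda>p. p) -` T \<inter> space (\<mu> \<Otimes>\<^sub>M \<mu>) \<in> sets (\<mu> \<Otimes>\<^sub>M \<mu>)"
    using \<open>open T\<close> by (intro measurable_sets) auto
  then show ?thesis
    using T assms(2) by (simp add: space_pair_measure Int_commute)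
qed

section \<open>Chernoff bounds for the number of sample points in a set\<close>

definition hits :: "('i \<Rightarrow> 'w \<Rightarrow> 'a) \<Rightarrow> 'i set \<Rightarrow> 'a set \<Rightarrow> 'w \<Rightarrow> real" where
  "hits X J C \<omega> = real (card {j \<in> J. X j \<omega> \<in> C})"

lemma hits_eq_sum_indicator: "finite J \<Longrightarrow> hits X J C \<omega> = (\<Sum>j\<in>J. indicator C (X j \<omega>))"
  using sum_indicator_eq_card[of J "{j. X j \<omega> \<in> C}"]
  by (simp add: hits_def indicator_def Int_def conj_commute)

lemma hits_nonneg: "hits X J C \<omega> \<ge> 0"
  by (simp add: hits_def)

lemma hits_le_card: "finite J \<Longrightarrow> hits X J C \<omega> \<le> real (card J)"
  by (simp add: hits_def card_mono)

lemma hits_mono: "finite J \<Longrightarrow> C \<subseteq> D \<Longrightarrow> hits X J C \<omega> \<le> hits X J D \<omega>"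
  unfolding hits_def by (intro of_nat_mono card_mono) auto

lemma bernoulli_mgf_nonneg: "0 \<le> p \<Longrightarrow> p \<le> 1 \<Longrightarrow> 0 \<le> 1 - p + p * exp (s::real)"
  by (intro add_nonneg_nonneg mult_nonneg_nonneg) auto

lemma bernoulli_mgf_power_le:
  assumes "0 \<le> p" "p \<le> 1"
  shows "(1 - p + p * exp s) ^ m \<le> exp (real m * p * (exp s - 1))"
proof -
  have "(1 - p + p * exp s) ^ m \<le> exp (p * (exp s - 1)) ^ m"
    using bernoulli_mgf_nonneg[OF assms] exp_ge_add_one_self[of "p * (exp s - 1)"]
    by (intro power_mono) (simp_all add: algebra_simps)
  then show ?thesis by (simp add: exp_of_nat_mult[symmetric] mult.assoc)
qed

lemma chernoff_exponent_sqrt: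
  fixes a p :: real
  assumes "0 < a" "0 < p"
  shows "a * ln (p / a) + (a - p) \<le> - (sqrt a - sqrt p)\<^sup>2"
proof -
  have "ln (p / a) = 2 * ln (sqrt (p / a))" using assms by (simp add: ln_sqrt)
  also have "\<dots> \<le> 2 * (sqrt (p / a) - 1)" using ln_le_minus_one[of "sqrt (p / a)"] assms by simp
  finally have "a * ln (p / a) \<le> a * (2 * (sqrt (p / a) - 1))" using assms by simp
  also have "a * sqrt (p / a) = sqrt a * sqrt p"
    using assms by (simp add: real_sqrt_divide field_simps)
  then have "a * (2 * (sqrt (p / a) - 1)) = 2 * sqrt a * sqrt p - 2 * a" by (simp add: algebra_simps)
  finally show ?thesis
    using assms by (simp add: power2_diff)
qed

locale iid_family = prob_space M + N: prob_space N
  for M :: "'w measure" and N :: "'a measure" +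
  fixes X :: "'i \<Rightarrow> 'w \<Rightarrow> 'a" and J :: "'i set"
  assumes finite_J: "finite J"
    and indep: "indep_vars (\<lambda>_. N) X J"
    and distr_X: "\<And>j. j \<in> J \<Longrightarrow> distr M N (X j) = N"
begin

lemma measurable_X: "j \<in> J \<Longrightarrow> X j \<in> measurable M N"
  using indep unfolding indep_vars_def2 by blast

lemma borel_measurable_hits: "C \<in> sets N \<Longrightarrow> hits X J C \<in> borel_measurable M"
proof -
  assume "C \<in> sets N"
  then have "(\<lambda>\<omega>. \<Sum>j\<in>J. indicator C (X j \<omega>) :: real) \<in> borel_measurable M"
    using measurable_X by (intro borel_measurable_sum) (simp add: measurable_compose[OF _ borel_measurable_indicator])
  then show ?thesis by (simp add: hits_eq_sum_indicator[OF finite_J, abs_def])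
qed

lemma hits_mgf:
  assumes C: "C \<in> sets N"
  shows "(\<integral>\<^sup>+\<omega>. ennreal (exp (s * hits X J C \<omega>)) * indicator (space M) \<omega> \<partial>M)
       = ennreal ((1 - measure N C + measure N C * exp s) ^ card J)"
proof -
  define q where "q = 1 - measure N C + measure N C * exp s"
  have "q \<ge> 0" unfolding q_def by (intro bernoulli_mgf_nonneg) auto
  have exp_indicator: "(\<lambda>z. exp (s * indicator C z) :: real) \<in> borel_measurable N"
    by (rule measurable_compose[OF borel_measurable_indicator[OF C]]) measurable
  have "(\<integral>\<^sup>+\<omega>. ennreal (exp (s * hits X J C \<omega>)) * indicator (space M) \<omega> \<partial>M)
      = (\<integral>\<^sup>+\<omega>. (\<Prod>j\<in>J. ennreal (exp (s * indicator C (X j \<omega>)))) \<partial>M)"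
    by (intro nn_integral_cong)
      (simp add: hits_eq_sum_indicator[OF finite_J] sum_distrib_left exp_sum[OF finite_J] prod_ennreal)
  also have "\<dots> = (\<Prod>j\<in>J. \<integral>\<^sup>+\<omega>. ennreal (exp (s * indicator C (X j \<omega>))) \<partial>M)"
    by (intro indep_vars_nn_integral finite_J indep_vars_compose2[OF indep]) (auto simp: exp_indicator)
  also have "\<dots> = (\<Prod>j\<in>J. ennreal q)"
  proof (rule prod.cong[OF refl])
    fix j assume "j \<in> J"
    have "(\<integral>\<^sup>+\<omega>. ennreal (exp (s * indicator C (X j \<omega>))) \<partial>M)
        = (\<integral>\<^sup>+z. ennreal (exp (s * indicator C z)) \<partial>distr M N (X j))"
      by (rule nn_integral_distr[OF measurable_X[OF \<open>j \<in> J\<close>], symmetric]) (simp add: exp_indicator)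
    also have "\<dots> = (\<integral>\<^sup>+z. ennreal (exp s) * indicator C z + indicator (space N - C) z \<partial>N)"
      unfolding distr_X[OF \<open>j \<in> J\<close>] by (intro nn_integral_cong) (auto split: split_indicator)
    also have "\<dots> = ennreal (exp s) * emeasure N C + emeasure N (space N - C)"
      using C by (subst nn_integral_add) (auto simp: nn_integral_cmult_indicator)
    also have "\<dots> = ennreal q"
      using C unfolding q_def
      by (simp add: N.emeasure_eq_measure N.prob_compl ennreal_mult[symmetric] ennreal_plus[symmetric]
          del: ennreal_plus)
    finally show "(\<integral>\<^sup>+\<omega>. ennreal (exp (s * indicator C (X j \<omega>))) \<partial>M) = ennreal q" .
  qed
  also have "\<dots> = ennreal (q ^ card J)" using \<open>q \<ge> 0\<close> by (simp add: prod_ennreal ennreal_power)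
  finally show ?thesis unfolding q_def .
qed

lemma hits_chernoff_exp:
  assumes C: "C \<in> sets N"
  shows "emeasure M {\<omega>\<in>space M. s * hits X J C \<omega> \<ge> c}
      \<le> ennreal (exp (- c + real (card J) * measure N C * (exp s - 1)))"
proof -
  note [measurable] = borel_measurable_hits[OF C]
  have "emeasure M {\<omega>\<in>space M. s * hits X J C \<omega> \<ge> c}
      \<le> ennreal (exp (- 1 * c)) * (\<integral>\<^sup>+\<omega>. ennreal (exp (1 * (s * hits X J C \<omega>))) * indicator (space M) \<omega> \<partial>M)"
    by (rule Chernoff_ineq_nn_integral_ge) auto
  also have "\<dots> = ennreal (exp (- c) * (1 - measure N C + measure N C * exp s) ^ card J)"
    using hits_mgf[OF C, of s] bernoulli_mgf_nonneg[of "measure N C" s]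
    by (simp add: ennreal_mult[symmetric])
  also have "\<dots> \<le> ennreal (exp (- c) * exp (real (card J) * measure N C * (exp s - 1)))"
    by (intro ennreal_leI mult_left_mono bernoulli_mgf_power_le) auto
  finally show ?thesis by (simp add: exp_add[symmetric])
qed

text \<open>If \<open>a > measure N C\<close> the event says that at least \<open>card J * a\<close> of the points lie in \<open>C\<close>, if
  \<open>a < measure N C\<close> (where \<open>s < 0\<close>) that at most \<open>card J * a\<close> do; in both cases \<open>s\<close> is the optimal
  Chernoff exponent.\<close>

lemma hits_chernoff_sqrt:
  fixes a :: real
  assumes C: "C \<in> sets N" and "0 < a" "0 < measure N C"
  defines "s \<equiv> ln (a / measure N C)"
  shows "emeasure M {\<omega>\<in>space M. s * hits X J C \<omega> \<ge> s * (card J * a)}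
      \<le> ennreal (exp (- real (card J) * (sqrt a - sqrt (measure N C))\<^sup>2))"
proof -
  define m where "m = real (card J)"
  define p where "p = measure N C"
  have "exp s = a / p" using assms by (simp add: s_def p_def)
  then have "- (s * (m * a)) + m * p * (exp s - 1) = m * (a * ln (p / a) + (a - p))"
    using assms by (simp add: s_def p_def ln_div field_simps)
  also have "\<dots> \<le> m * - (sqrt a - sqrt p)\<^sup>2"
    using chernoff_exponent_sqrt[of a p] assms by (intro mult_left_mono) (auto simp: m_def p_def)
  finally show ?thesis
    using hits_chernoff_exp[OF C, where s = s and c = "s * (m * a)"]
    by (simp add: m_def p_def order_trans[OF _ ennreal_leI])
qed

lemma sqrt_hits_upper_tail:
  assumes C: "C \<in> sets N" and "t > 0" and "J \<noteq> {}"
  shows "prob {\<omega>\<in>space M. sqrt (hits X J C \<omega> / card J) > sqrt (measure N C) + t}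
     \<le> exp (- real (card J) * t\<^sup>2)"
proof -
  define m where "m = real (card J)"
  define p where "p = measure N C"
  define a where "a = (sqrt p + t)\<^sup>2"
  have "m > 0" "p \<ge> 0" using \<open>J \<noteq> {}\<close> finite_J by (auto simp: m_def p_def card_gt_0_iff)
  have "sqrt a - sqrt p = t" using \<open>t > 0\<close> \<open>p \<ge> 0\<close> by (simp add: a_def)
  have "{\<omega>\<in>space M. sqrt (hits X J C \<omega> / card J) > sqrt p + t} \<subseteq> {\<omega>\<in>space M. m * a \<le> hits X J C \<omega>}"
  proof safe
    fix \<omega> assume "sqrt (hits X J C \<omega> / card J) > sqrt p + t"
    then have "a < (sqrt (hits X J C \<omega> / m))\<^sup>2"
      unfolding a_def m_def using \<open>t > 0\<close> \<open>p \<ge> 0\<close> by (intro power_strict_mono) auto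
    then show "m * a \<le> hits X J C \<omega>" using hits_nonneg[of X J C \<omega>] \<open>m > 0\<close> by (simp add: field_simps)
  qed
  then have "emeasure M {\<omega>\<in>space M. sqrt (hits X J C \<omega> / card J) > sqrt p + t}
      \<le> emeasure M {\<omega>\<in>space M. m * a \<le> hits X J C \<omega>}"
    by (rule emeasure_mono) (use borel_measurable_hits[OF C] in measurable)
  also have "\<dots> \<le> ennreal (exp (- m * t\<^sup>2))"
  proof (cases "p = 0")
    case True
    then show ?thesis
      using hits_chernoff_exp[OF C, where s = 1 and c = "m * a"] by (simp add: a_def m_def p_def)
  next
    case False
    then have "p > 0" "a > p" using \<open>p \<ge> 0\<close> \<open>sqrt a - sqrt p = t\<close> \<open>t > 0\<close> by auto
    then have "ln (a / p) > 0" by simp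
    then have "{\<omega>\<in>space M. m * a \<le> hits X J C \<omega>}
        = {\<omega>\<in>space M. ln (a / p) * hits X J C \<omega> \<ge> ln (a / p) * (m * a)}"
      by (auto simp: mult_le_cancel_left_pos)
    then show ?thesis
      using hits_chernoff_sqrt[OF C, of a] \<open>p > 0\<close> \<open>a > p\<close> \<open>sqrt a - sqrt p = t\<close> by (simp add: m_def p_def)
  qed
  finally show ?thesis by (simp add: m_def p_def emeasure_eq_measure)
qed

lemma sqrt_hits_lower_tail:
  assumes C: "C \<in> sets N" and "t > 0" and "J \<noteq> {}"
  shows "prob {\<omega>\<in>space M. sqrt (hits X J C \<omega> / card J) < sqrt (measure N C) - t}
     \<le> exp (- real (card J) * t\<^sup>2)"
proof (cases "t < sqrt (measure N C)")
  case False
  then have "{\<omega>\<in>space M. sqrt (hits X J C \<omega> / card J) < sqrt (measure N C) - t} = {}"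
    using hits_nonneg[of X J C] by (auto simp: not_less intro!: order.trans[OF _ real_sqrt_ge_zero])
  then show ?thesis by (simp only: measure_empty) simp
next
  case True
  define m where "m = real (card J)"
  define p where "p = measure N C"
  define a where "a = (sqrt p - t)\<^sup>2"
  have "m > 0" using \<open>J \<noteq> {}\<close> finite_J by (simp add: m_def card_gt_0_iff)
  have "0 < sqrt p" using True \<open>t > 0\<close> unfolding p_def by linarith
  then have "p > 0" by simp
  have "a > 0" "sqrt a - sqrt p = - t" using True by (simp_all add: a_def p_def)
  then have "a < p" using \<open>t > 0\<close> \<open>p > 0\<close> by (metis diff_less_0_iff_less neg_less_0_iff_less real_sqrt_less_iff)
  then have "ln (a / p) < 0" using \<open>a > 0\<close> by simp
  have "{\<omega>\<in>space M. sqrt (hits X J C \<omega> / card J) < sqrt p - t}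
      \<subseteq> {\<omega>\<in>space M. ln (a / p) * hits X J C \<omega> \<ge> ln (a / p) * (m * a)}"
  proof safe
    fix \<omega> assume "sqrt (hits X J C \<omega> / card J) < sqrt p - t"
    then have "(sqrt (hits X J C \<omega> / m))\<^sup>2 < a"
      unfolding a_def m_def using hits_nonneg[of X J C \<omega>] by (intro power_strict_mono) auto
    then have "hits X J C \<omega> \<le> m * a" using hits_nonneg[of X J C \<omega>] \<open>m > 0\<close> by (simp add: field_simps)
    then show "ln (a / p) * hits X J C \<omega> \<ge> ln (a / p) * (m * a)"
      using \<open>ln (a / p) < 0\<close> by (simp add: mult_le_cancel_left)
  qed
  then have "emeasure M {\<omega>\<in>space M. sqrt (hits X J C \<omega> / card J) < sqrt p - t}
      \<le> emeasure M {\<omega>\<in>space M. ln (a / p) * hits X J C \<omega> \<ge> ln (a / p) * (m * a)}"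
    by (rule emeasure_mono) (use borel_measurable_hits[OF C] in measurable)
  also have "\<dots> \<le> ennreal (exp (- m * t\<^sup>2))"
    using hits_chernoff_sqrt[OF C \<open>a > 0\<close>] \<open>p > 0\<close> \<open>sqrt a - sqrt p = - t\<close> by (simp add: m_def p_def)
  finally show ?thesis by (simp add: m_def p_def emeasure_eq_measure)
qed

end

section \<open>Increasing families of sets that are open from the left\<close>

locale left_open_chain = prob_space N for N :: "'a measure" +
  fixes B :: "real \<Rightarrow> 'a set"
  assumes sets_B [measurable]: "B r \<in> sets N"
    and mono_B: "r \<le> r' \<Longrightarrow> B r \<subseteq> B r'"
    and left_open: "z \<in> B r \<Longrightarrow> \<exists>s<r. z \<in> B s"
begin

lemma measure_B_mono: "r \<le> r' \<Longrightarrow> measure N (B r) \<le> measure N (B r')"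
  by (intro finite_measure_mono mono_B sets_B)

lemma measure_UN_B_le:
  assumes "countable I" and le: "\<And>s. s \<in> I \<Longrightarrow> measure N (B s) \<le> c" and "c \<ge> 0"
  shows "measure N (\<Union>s\<in>I. B s) \<le> c"
proof (cases "I = {}")
  case False
  define f where "f = from_nat_into I"
  have f: "f k \<in> I" for k unfolding f_def using from_nat_into[OF False] .
  define A where "A k = B (Max (f ` {..k}))" for k
  have "Max (f ` {..k}) \<in> I" for k by (rule subsetD[OF _ Max_in]) (use f in auto)
  then have A: "A k \<in> sets N" "measure N (A k) \<le> c" for k unfolding A_def using le by auto
  have "incseq A" unfolding A_def by (intro monoI mono_B Max_mono) auto
  have "(\<Union>k. A k) = (\<Union>s\<in>I. B s)"
  proof
    show "(\<Union>k. A k) \<subseteq> (\<Union>s\<in>I. B s)"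
      unfolding A_def using \<open>\<And>k. Max (f ` {..k}) \<in> I\<close> by blast
    show "(\<Union>s\<in>I. B s) \<subseteq> (\<Union>k. A k)"
    proof safe
      fix s z assume "s \<in> I" "z \<in> B s"
      then obtain k where "s = f k" using range_from_nat_into[OF False \<open>countable I\<close>] by (auto simp: f_def)
      then have "B s \<subseteq> A k" unfolding A_def by (intro mono_B Max_ge) auto
      then show "z \<in> (\<Union>k. A k)" using \<open>z \<in> B s\<close> by blast
    qed
  qed
  moreover have "(\<lambda>k. measure N (A k)) \<longlonglongrightarrow> measure N (\<Union>k. A k)"
    using A(1) \<open>incseq A\<close> by (intro finite_Lim_measure_incseq) auto
  ultimately have "(\<lambda>k. measure N (A k)) \<longlonglongrightarrow> measure N (\<Union>s\<in>I. B s)" by simp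
  then show ?thesis by (rule LIMSEQ_le_const2) (use A(2) in auto)
qed (use \<open>c \<ge> 0\<close> in simp)

lemma measure_INT_B_ge:
  assumes "countable I" "I \<noteq> {}" and ge: "\<And>s. s \<in> I \<Longrightarrow> c \<le> measure N (B s)"
  shows "c \<le> measure N (\<Inter>s\<in>I. B s)"
proof -
  define f where "f = from_nat_into I"
  have f: "f k \<in> I" for k unfolding f_def using from_nat_into[OF \<open>I \<noteq> {}\<close>] .
  define A where "A k = B (Min (f ` {..k}))" for k
  have "Min (f ` {..k}) \<in> I" for k by (rule subsetD[OF _ Min_in]) (use f in auto)
  then have A: "A k \<in> sets N" "c \<le> measure N (A k)" for k unfolding A_def using ge by auto
  have "decseq A" unfolding A_def by (intro antimonoI mono_B Min_antimono) auto
  have "(\<Inter>k. A k) = (\<Inter>s\<in>I. B s)"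
  proof
    show "(\<Inter>s\<in>I. B s) \<subseteq> (\<Inter>k. A k)"
      unfolding A_def using \<open>\<And>k. Min (f ` {..k}) \<in> I\<close> by blast
    show "(\<Inter>k. A k) \<subseteq> (\<Inter>s\<in>I. B s)"
    proof safe
      fix s z assume "s \<in> I" "z \<in> (\<Inter>k. A k)"
      then obtain k where "s = f k" using range_from_nat_into[OF \<open>I \<noteq> {}\<close> \<open>countable I\<close>] by (auto simp: f_def)
      then have "A k \<subseteq> B s" unfolding A_def by (intro mono_B Min_le) auto
      then show "z \<in> B s" using \<open>z \<in> (\<Inter>k. A k)\<close> by blast
    qed
  qed
  moreover have "(\<lambda>k. measure N (A k)) \<longlonglongrightarrow> measure N (\<Inter>k. A k)"
    using A(1) \<open>decseq A\<close> by (intro finite_Lim_measure_decseq) auto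
  ultimately have "(\<lambda>k. measure N (A k)) \<longlonglongrightarrow> measure N (\<Inter>s\<in>I. B s)" by simp
  then show ?thesis by (rule LIMSEQ_le_const) (use A(2) in auto)
qed

text \<open>\<open>cover q\<close> contains every member of measure \<open>< q\<close>, and \<open>core q\<close> is contained in every member of
  measure \<open>\<ge> q\<close>. Indexing by rational radii keeps them countable unions and intersections; the
  infimum is added to the index set of \<open>core q\<close> in case it is attained.\<close>

definition cover :: "real \<Rightarrow> 'a set" where
  "cover q = (\<Union>s\<in>{s\<in>\<rat>. measure N (B s) < q}. B s)"

definition core_index :: "real \<Rightarrow> real set" where
  "core_index q = (let R = {s. q \<le> measure N (B s)} in {s\<in>R. s \<in> \<rat> \<or> s = Inf R})"

definition core :: "real \<Rightarrow> 'a set" where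
  "core q = space N \<inter> (\<Inter>s\<in>core_index q. B s)"

lemma sets_cover: "cover q \<in> sets N"
  unfolding cover_def by (intro sets.countable_UN'' countable_subset[OF _ countable_rat] sets_B) auto

lemma measure_cover_le: "q \<ge> 0 \<Longrightarrow> measure N (cover q) \<le> q"
  unfolding cover_def by (rule measure_UN_B_le) (auto intro: countable_subset[OF _ countable_rat])

lemma subset_cover: "measure N (B r) < q \<Longrightarrow> B r \<subseteq> cover q"
proof
  fix z assume "measure N (B r) < q" "z \<in> B r"
  then obtain s where "s < r" "z \<in> B s" using left_open by blast
  then obtain s' where "s' \<in> \<rat>" "s < s'" "s' < r" using Rats_dense_in_real by blast
  then have "z \<in> B s'" "measure N (B s') < q"
    using mono_B[of s s'] measure_B_mono[of s' r] \<open>z \<in> B s\<close> \<open>measure N (B r) < q\<close> by auto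
  then show "z \<in> cover q" unfolding cover_def using \<open>s' \<in> \<rat>\<close> by blast
qed

lemma countable_core_index: "countable (core_index q)"
  by (rule countable_subset[of _ "insert (Inf {s. q \<le> measure N (B s)}) \<rat>"])
    (auto simp: core_index_def countable_rat)

lemma core_index_le_measure: "s \<in> core_index q \<Longrightarrow> q \<le> measure N (B s)"
  by (simp add: core_index_def)

lemma core_index_below:
  assumes "q \<le> measure N (B r)"
  shows "\<exists>s\<in>core_index q. s \<le> r"
proof -
  define R where "R = {s. q \<le> measure N (B s)}"
  have "r \<in> R" using assms by (simp add: R_def)
  show ?thesis
  proof (cases "\<exists>s\<in>R. s < r")
    case True
    then obtain s s' where "s \<in> R" "s < s'" "s' < r" "s' \<in> \<rat>" using Rats_dense_in_real by blast
    then have "s' \<in> R" using measure_B_mono[of s s'] by (auto simp: R_def)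
    then show ?thesis using \<open>s' \<in> \<rat>\<close> \<open>s' < r\<close> by (auto simp: core_index_def R_def[symmetric])
  next
    case False
    then have "Inf R = r" using \<open>r \<in> R\<close> by (intro cInf_eq_minimum) (auto simp: not_less)
    then show ?thesis using \<open>r \<in> R\<close> by (auto simp: core_index_def R_def[symmetric])
  qed
qed

lemma sets_core: "core q \<in> sets N"
proof (cases "core_index q = {}")
  case False
  then have "(\<Inter>s\<in>core_index q. B s) \<in> sets N"
    using countable_core_index by (intro sets.countable_INT') auto
  then show ?thesis unfolding core_def by auto
qed (simp add: core_def)

lemma measure_core_ge: "q \<le> 1 \<Longrightarrow> q \<le> measure N (core q)"
proof (cases "core_index q = {}")
  case False
  then have "q \<le> measure N (\<Inter>s\<in>core_index q. B s)"
    using countable_core_index core_index_le_measure by (intro measure_INT_B_ge) auto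
  moreover have "(\<Inter>s\<in>core_index q. B s) \<subseteq> space N" using False sets.sets_into_space[OF sets_B] by blast
  ultimately show ?thesis by (simp add: core_def Int_absorb1)
qed (simp add: core_def prob_space)

lemma core_subset: "q \<le> measure N (B r) \<Longrightarrow> core q \<subseteq> B r"
  using core_index_below mono_B unfolding core_def by blast

lemma measure_B_at_left: "((\<lambda>s. measure N (B s)) \<longlongrightarrow> measure N (B r)) (at_left r)"
proof (rule tendsto_at_left_sequentially[of "r - 1"])
  fix S :: "nat \<Rightarrow> real" assume S: "\<And>n. S n < r" "incseq S" "S \<longlonglongrightarrow> r"
  have "(\<Union>n. B (S n)) = B r"
  proof
    show "(\<Union>n. B (S n)) \<subseteq> B r"
      using S(1) by (intro UN_least mono_B less_imp_le)
    show "B r \<subseteq> (\<Union>n. B (S n))"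
    proof
      fix z assume "z \<in> B r"
      then obtain s where "s < r" "z \<in> B s" using left_open by blast
      then obtain n where "s < S n"
        using order_tendstoD(1)[OF S(3)] by (auto simp: eventually_sequentially)
      then show "z \<in> (\<Union>n. B (S n))" using mono_B[of s "S n"] \<open>z \<in> B s\<close> by auto
    qed
  qed
  moreover have "incseq (\<lambda>n. B (S n))" using S(2) mono_B by (simp add: incseq_def)
  then have "(\<lambda>n. measure N (B (S n))) \<longlonglongrightarrow> measure N (\<Union>n. B (S n))"
    by (intro finite_Lim_measure_incseq) auto
  ultimately show "(\<lambda>n. measure N (B (S n))) \<longlonglongrightarrow> measure N (B r)" by simp
qed simp

lemma hits_B_eventually_at_left:
  assumes "finite J"
  shows "eventually (\<lambda>s. hits Y J (B s) \<omega> = hits Y J (B r) \<omega>) (at_left r)"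
proof -
  have "eventually (\<lambda>s. Y j \<omega> \<in> B s \<longleftrightarrow> Y j \<omega> \<in> B r) (at_left r)" for j
  proof (cases "Y j \<omega> \<in> B r")
    case True
    then obtain s where "s < r" "Y j \<omega> \<in> B s" using left_open by blast
    then have "\<forall>y>s. Y j \<omega> \<in> B y" using mono_B by (meson less_imp_le subsetD)
    then show ?thesis
      using eventually_at_left_real[OF \<open>s < r\<close>] True by (auto elim!: eventually_mono)
  next
    case False
    then have "\<forall>y<r. Y j \<omega> \<notin> B y" using mono_B by (meson less_imp_le subsetD)
    then show ?thesis
      using eventually_at_left_real[of "r - 1" r] False by (auto elim!: eventually_mono)
  qed
  then have "eventually (\<lambda>s. \<forall>j\<in>J. Y j \<omega> \<in> B s \<longleftrightarrow> Y j \<omega> \<in> B r) (at_left r)"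
    using assms by (simp add: eventually_ball_finite)
  then show ?thesis
    by (rule eventually_mono) (simp add: hits_def cong: conj_cong)
qed

end

lemma nat_floor_bounds:
  fixes x :: real
  assumes "0 \<le> x"
  shows "real (nat \<lfloor>x\<rfloor>) \<le> x" "x < real (nat \<lfloor>x\<rfloor>) + 1"
  using assms floor_correct[of x] by auto

lemma sqrt_le_sqrt_add: "0 \<le> b \<Longrightarrow> 0 \<le> c \<Longrightarrow> a \<le> b + c \<Longrightarrow> sqrt a \<le> sqrt b + sqrt c"
  by (meson order.trans real_sqrt_le_iff sqrt_add_le_add_sqrt)

lemma sqrt_shifted_ratio_le:
  fixes S m :: real
  assumes "0 \<le> S" "0 < m"
  shows "sqrt ((1 + S) / (m + 1)) \<le> sqrt (S / m) + sqrt (1 / (m + 1))"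
proof (rule sqrt_le_sqrt_add)
  have "S / (m + 1) \<le> S / m" using assms by (intro divide_left_mono) auto
  then show "(1 + S) / (m + 1) \<le> S / m + 1 / (m + 1)" by (simp add: add_divide_distrib)
qed (use assms in auto)

lemma sqrt_ratio_le_shifted:
  fixes S m :: real
  assumes "S \<le> m" "0 < m"
  shows "sqrt (S / m) \<le> sqrt ((1 + S) / (m + 1))"
proof -
  have "S * (m + 1) \<le> (1 + S) * m" using assms by (simp add: algebra_simps)
  then show ?thesis using assms by (simp add: divide_simps)
qed

context left_open_chain
begin

lemma grid_cover:
  fixes K :: nat
  assumes "K > 0" "measure N (B r) < 1"
  obtains k :: nat where "k \<le> K" "B r \<subseteq> cover (k / K)" "measure N (cover (k / K)) \<le> measure N (B r) + 1 / K"
proof -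
  define F where "F = measure N (B r)"
  define k where "k = nat \<lfloor>K * F\<rfloor> + 1"
  have "K * F < K" "0 \<le> K * F" using assms by (simp_all add: F_def)
  then have "real (nat \<lfloor>K * F\<rfloor>) < K" using nat_floor_bounds(1)[of "K * F"] by linarith
  then have "k \<le> K" by (simp add: k_def)
  have "F < k / K" "k / K \<le> F + 1 / K"
    using nat_floor_bounds[of "K * F"] \<open>K > 0\<close> by (auto simp: k_def F_def field_simps)
  then show ?thesis
    using that[of k] \<open>k \<le> K\<close> subset_cover[of r "k / K"] measure_cover_le[of "k / K"] by (simp add: F_def)
qed

lemma grid_core:
  fixes K :: nat
  assumes "K > 0"
  obtains k :: nat where "k \<le> K" "core (k / K) \<subseteq> B r" "measure N (B r) \<le> measure N (core (k / K)) + 1 / K"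
proof -
  define F where "F = measure N (B r)"
  define k where "k = nat \<lfloor>K * F\<rfloor>"
  have "K * F \<le> K" "0 \<le> K * F" by (simp_all add: F_def mult_left_le)
  then have "real (nat \<lfloor>K * F\<rfloor>) \<le> K" using nat_floor_bounds(1)[of "K * F"] by linarith
  then have "k \<le> K" by (simp add: k_def)
  have "k / K \<le> F" "F \<le> k / K + 1 / K"
    using nat_floor_bounds[of "K * F"] \<open>K > 0\<close> by (auto simp: k_def F_def field_simps)
  moreover have "k / K \<le> 1" using \<open>k \<le> K\<close> \<open>K > 0\<close> by (simp add: divide_le_eq_1)
  ultimately show ?thesis
    using that[of k] \<open>k \<le> K\<close> core_subset[of "k / K" r] measure_core_ge[of "k / K"] by (simp add: F_def)
qed

lemma grid_upper_deviation:
  fixes X :: "'i \<Rightarrow> 'w \<Rightarrow> 'a" and K :: nat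
  assumes "finite J" "J \<noteq> {}" "K > 0" "t \<ge> 0"
    and dev: "sqrt ((1 + hits X J (B r) \<omega>) / (real (card J) + 1))
      > sqrt (measure N (B r)) + t + sqrt (1 / K) + sqrt (1 / (real (card J) + 1))"
  shows "\<exists>k\<le>K. sqrt (hits X J (cover (k / K)) \<omega> / card J) > sqrt (measure N (cover (k / K))) + t"
proof -
  define m where "m = real (card J)"
  define S where "S = hits X J (B r) \<omega>"
  define F where "F = measure N (B r)"
  have "m > 0" using assms(1,2) by (simp add: m_def card_gt_0_iff)
  have S: "0 \<le> S" "S \<le> m" using hits_nonneg hits_le_card[OF assms(1)] by (auto simp: S_def m_def)
  have "sqrt ((1 + S) / (m + 1)) \<le> 1" "sqrt (1 / K) \<ge> 0" "sqrt (1 / (m + 1)) > 0"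
    using S \<open>m > 0\<close> by simp_all
  then have "sqrt F < 1" using dev \<open>t \<ge> 0\<close> unfolding S_def F_def m_def by linarith
  then obtain k where "k \<le> K" "B r \<subseteq> cover (k / K)" and cover: "measure N (cover (k / K)) \<le> F + 1 / K"
    using grid_cover \<open>K > 0\<close> unfolding F_def by auto
  have "sqrt ((1 + S) / (m + 1)) \<le> sqrt (S / m) + sqrt (1 / (m + 1))"
    using S(1) \<open>m > 0\<close> by (rule sqrt_shifted_ratio_le)
  moreover have "S \<le> hits X J (cover (k / K)) \<omega>"
    unfolding S_def using hits_mono[OF assms(1) \<open>B r \<subseteq> cover (k / K)\<close>] .
  then have "sqrt (S / m) \<le> sqrt (hits X J (cover (k / K)) \<omega> / m)"
    using \<open>m > 0\<close> by (simp add: divide_right_mono)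
  moreover have "sqrt (measure N (cover (k / K))) \<le> sqrt F + sqrt (1 / K)"
    using cover \<open>K > 0\<close> by (intro sqrt_le_sqrt_add) (auto simp: F_def)
  ultimately have "sqrt (hits X J (cover (k / K)) \<omega> / m) > sqrt (measure N (cover (k / K))) + t"
    using dev unfolding S_def F_def m_def by linarith
  then show ?thesis using \<open>k \<le> K\<close> unfolding m_def by blast
qed

lemma grid_lower_deviation:
  fixes X :: "'i \<Rightarrow> 'w \<Rightarrow> 'a" and K :: nat
  assumes "finite J" "J \<noteq> {}" "K > 0"
    and dev: "sqrt (measure N (B r))
      > sqrt ((1 + hits X J (B r) \<omega>) / (real (card J) + 1)) + t + sqrt (1 / K) + sqrt (1 / (real (card J) + 1))"
  shows "\<exists>k\<le>K. sqrt (hits X J (core (k / K)) \<omega> / card J) < sqrt (measure N (core (k / K))) - t"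
proof -
  define m where "m = real (card J)"
  define S where "S = hits X J (B r) \<omega>"
  have "m > 0" using assms(1,2) by (simp add: m_def card_gt_0_iff)
  have "S \<le> m" using hits_le_card[OF assms(1)] by (simp add: S_def m_def)
  obtain k where "k \<le> K" "core (k / K) \<subseteq> B r" and core: "measure N (B r) \<le> measure N (core (k / K)) + 1 / K"
    using grid_core \<open>K > 0\<close> by blast
  have "sqrt (measure N (B r)) \<le> sqrt (measure N (core (k / K))) + sqrt (1 / K)"
    using core \<open>K > 0\<close> by (intro sqrt_le_sqrt_add) auto
  moreover have "hits X J (core (k / K)) \<omega> \<le> S"
    unfolding S_def using hits_mono[OF assms(1) \<open>core (k / K) \<subseteq> B r\<close>] .
  then have "sqrt (hits X J (core (k / K)) \<omega> / m) \<le> sqrt (S / m)"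
    using \<open>m > 0\<close> by (simp add: divide_right_mono)
  moreover have "sqrt (S / m) \<le> sqrt ((1 + S) / (m + 1))"
    using \<open>S \<le> m\<close> \<open>m > 0\<close> by (rule sqrt_ratio_le_shifted)
  moreover have "sqrt (1 / (m + 1)) > 0" using \<open>m > 0\<close> by simp
  ultimately have "sqrt (hits X J (core (k / K)) \<omega> / m) < sqrt (measure N (core (k / K))) - t"
    using dev unfolding S_def m_def by linarith
  then show ?thesis using \<open>k \<le> K\<close> unfolding m_def by blast
qed

end

text \<open>Up to the discretisation error \<open>1/K\<close>, a deviation of the shifted empirical frequency at some
  radius is a deviation at one of the \<open>2 (K + 1)\<close> fixed sets \<open>cover (k / K)\<close>, \<open>core (k / K)\<close>.\<close>

lemma (in iid_family) uniform_sqrt_hits_deviation: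
  fixes K :: nat
  assumes "left_open_chain N B" "K > 0" "t > 0" "J \<noteq> {}"
    and "A \<in> events"
    and A: "A \<subseteq> {\<omega>\<in>space M. \<exists>r. \<bar>sqrt ((1 + hits X J (B r) \<omega>) / (real (card J) + 1)) - sqrt (measure N (B r))\<bar>
      > t + sqrt (1 / K) + sqrt (1 / (real (card J) + 1))}"
  shows "prob A \<le> 2 * (real K + 1) * exp (- real (card J) * t\<^sup>2)"
proof -
  interpret B: left_open_chain N B by fact
  have sqrt_freq: "(\<lambda>\<omega>. sqrt (hits X J C \<omega> / card J)) \<in> borel_measurable M" if "C \<in> sets N" for C
    using borel_measurable_hits[OF that] by measurable
  define e where "e = exp (- real (card J) * t\<^sup>2)"
  define U where "U k = {\<omega>\<in>space M. sqrt (hits X J (B.cover (k / K)) \<omega> / card J)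
    > sqrt (measure N (B.cover (k / K))) + t}" for k :: nat
  define L where "L k = {\<omega>\<in>space M. sqrt (hits X J (B.core (k / K)) \<omega> / card J)
    < sqrt (measure N (B.core (k / K))) - t}" for k :: nat
  have UL: "U k \<in> events" "L k \<in> events" for k
    unfolding U_def L_def using sqrt_freq B.sets_cover B.sets_core
    by (intro borel_measurable_less borel_measurable_const; blast)+
  have "A \<subseteq> (\<Union>k\<le>K. U k \<union> L k)"
  proof
    fix \<omega> assume "\<omega> \<in> A"
    then obtain r where "\<omega> \<in> space M" and dev: "\<bar>sqrt ((1 + hits X J (B r) \<omega>) / (real (card J) + 1))
      - sqrt (measure N (B r))\<bar> > t + sqrt (1 / K) + sqrt (1 / (real (card J) + 1))"
      using A by blast
    consider "sqrt ((1 + hits X J (B r) \<omega>) / (real (card J) + 1))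
        > sqrt (measure N (B r)) + t + sqrt (1 / K) + sqrt (1 / (real (card J) + 1))"
      | "sqrt (measure N (B r))
        > sqrt ((1 + hits X J (B r) \<omega>) / (real (card J) + 1)) + t + sqrt (1 / K) + sqrt (1 / (real (card J) + 1))"
      using dev by linarith
    then have "\<exists>k\<le>K. \<omega> \<in> U k \<or> \<omega> \<in> L k"
    proof cases
      case 1
      then show ?thesis using B.grid_upper_deviation[OF finite_J \<open>J \<noteq> {}\<close> \<open>K > 0\<close> _ 1] \<open>t > 0\<close> \<open>\<omega> \<in> space M\<close>
        unfolding U_def by auto
    next
      case 2
      then show ?thesis using B.grid_lower_deviation[OF finite_J \<open>J \<noteq> {}\<close> \<open>K > 0\<close> 2] \<open>\<omega> \<in> space M\<close>
        unfolding L_def by auto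
    qed
    then show "\<omega> \<in> (\<Union>k\<le>K. U k \<union> L k)" by blast
  qed
  then have "prob A \<le> prob (\<Union>k\<le>K. U k \<union> L k)"
    using \<open>A \<in> events\<close> UL by (intro finite_measure_mono) auto
  also have "\<dots> \<le> (\<Sum>k\<le>K. prob (U k \<union> L k))"
    using UL by (intro finite_measure_subadditive_finite) auto
  also have "\<dots> \<le> (\<Sum>k\<le>K. 2 * e)"
  proof (rule sum_mono)
    fix k
    have "prob (U k \<union> L k) \<le> prob (U k) + prob (L k)" using UL by (intro measure_Un_le) auto
    also have "\<dots> \<le> 2 * e"
      using sqrt_hits_upper_tail[OF B.sets_cover \<open>t > 0\<close> \<open>J \<noteq> {}\<close>, of "k / K"]
        sqrt_hits_lower_tail[OF B.sets_core \<open>t > 0\<close> \<open>J \<noteq> {}\<close>, of "k / K"]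
      unfolding U_def L_def e_def by linarith
    finally show "prob (U k \<union> L k) \<le> 2 * e" .
  qed
  finally show ?thesis by (simp add: e_def algebra_simps)
qed

section \<open>Deviations around the sample points\<close>

lemma (in prob_space) prob_indep_pair_le:
  assumes ind: "indep_var N1 X N2 Y" and A: "A \<in> sets (N1 \<Otimes>\<^sub>M N2)" and "\<delta> \<ge> 0"
    and sections: "\<And>x. x \<in> space N1 \<Longrightarrow> prob {\<omega>\<in>space M. (x, Y \<omega>) \<in> A} \<le> \<delta>"
  shows "prob {\<omega>\<in>space M. (X \<omega>, Y \<omega>) \<in> A} \<le> \<delta>"
proof -
  have X: "random_variable N1 X" and Y: "random_variable N2 Y"
    using ind by (blast dest: indep_var_rv1 indep_var_rv2)+
  let ?D1 = "distr M N1 X" and ?D2 = "distr M N2 Y"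
  interpret D2: prob_space ?D2 using Y by (rule prob_space_distr)
  have "sets (?D1 \<Otimes>\<^sub>M ?D2) = sets (N1 \<Otimes>\<^sub>M N2)" by (intro sets_pair_measure_cong) auto
  then have A': "A \<in> sets (?D1 \<Otimes>\<^sub>M ?D2)" using A by simp
  have "emeasure M {\<omega>\<in>space M. (X \<omega>, Y \<omega>) \<in> A} = emeasure (distr M (N1 \<Otimes>\<^sub>M N2) (\<lambda>\<omega>. (X \<omega>, Y \<omega>))) A"
    using X Y A by (subst emeasure_distr) (auto intro!: arg_cong[where f="emeasure M"])
  also have "\<dots> = emeasure (?D1 \<Otimes>\<^sub>M ?D2) A"
    using ind unfolding indep_var_distribution_eq by simp
  also have "\<dots> = (\<integral>\<^sup>+x. emeasure ?D2 (Pair x -` A) \<partial>?D1)"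
    using A' by (rule D2.emeasure_pair_measure_alt)
  also have "\<dots> \<le> (\<integral>\<^sup>+x. ennreal \<delta> \<partial>?D1)"
  proof (rule nn_integral_mono)
    fix x assume "x \<in> space ?D1"
    have "emeasure ?D2 (Pair x -` A) = emeasure M {\<omega>\<in>space M. (x, Y \<omega>) \<in> A}"
      using Y sets_Pair1[OF A] by (subst emeasure_distr) (auto intro!: arg_cong[where f="emeasure M"])
    also have "\<dots> \<le> ennreal \<delta>"
      using sections[of x] \<open>x \<in> space ?D1\<close> by (simp add: emeasure_eq_measure ennreal_leI)
    finally show "emeasure ?D2 (Pair x -` A) \<le> ennreal \<delta>" .
  qed
  also have "\<dots> = ennreal \<delta>"
  proof -
    interpret D1: prob_space ?D1 using X by (rule prob_space_distr)
    show ?thesis using D1.emeasure_space_1 by simp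
  qed
  finally show ?thesis using \<open>\<delta> \<ge> 0\<close> by (simp add: emeasure_eq_measure)
qed

text \<open>\<open>indep_var\<close> requires both variables to take values in the same type, so \<open>X i\<close> enters through
  its restriction to \<open>{i}\<close>.\<close>

lemma (in prob_space) prob_indep_vars_component_le:
  fixes X :: "'i \<Rightarrow> 'a \<Rightarrow> 'b"
  assumes X_indep: "indep_vars (\<lambda>_. N) X I" and "i \<in> I" "J \<subseteq> I - {i}"
    and A: "A \<in> sets (N \<Otimes>\<^sub>M PiM J (\<lambda>_. N))" and "\<delta> \<ge> 0"
    and sections: "\<And>x. x \<in> space N \<Longrightarrow> prob {\<omega>\<in>space M. (x, restrict (\<lambda>j. X j \<omega>) J) \<in> A} \<le> \<delta>"
  shows "prob {\<omega>\<in>space M. (X i \<omega>, restrict (\<lambda>j. X j \<omega>) J) \<in> A} \<le> \<delta>"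
proof -
  let ?Pi = "PiM {i} (\<lambda>_. N)" and ?PJ = "PiM J (\<lambda>_. N)"
  define R where "R \<omega> = restrict (\<lambda>j. X j \<omega>) {i}" for \<omega>
  define Y where "Y \<omega> = restrict (\<lambda>j. X j \<omega>) J" for \<omega>
  have ind: "indep_var ?Pi R ?PJ Y"
    unfolding R_def Y_def using assms(2,3) by (intro indep_var_restrict[OF X_indep]) auto
  have "random_variable ?Pi R" "random_variable ?PJ Y"
    using ind by (blast dest: indep_var_rv1 indep_var_rv2)+
  define A' where "A' = (\<lambda>p. (fst p i, snd p)) -` A \<inter> space (?Pi \<Otimes>\<^sub>M ?PJ)"
  have A': "A' \<in> sets (?Pi \<Otimes>\<^sub>M ?PJ)" unfolding A'_def using A by measurable
  have "{\<omega>\<in>space M. (X i \<omega>, Y \<omega>) \<in> A} = {\<omega>\<in>space M. (R \<omega>, Y \<omega>) \<in> A'}"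
    using measurable_space[OF \<open>random_variable ?Pi R\<close>] measurable_space[OF \<open>random_variable ?PJ Y\<close>]
    by (auto simp: A'_def R_def space_pair_measure)
  also have "prob \<dots> \<le> \<delta>"
  proof (rule prob_indep_pair_le[OF ind A' \<open>\<delta> \<ge> 0\<close>])
    fix f assume "f \<in> space ?Pi"
    then have "f i \<in> space N" "{\<omega>\<in>space M. (f, Y \<omega>) \<in> A'} = {\<omega>\<in>space M. (f i, Y \<omega>) \<in> A}"
      using measurable_space[OF \<open>random_variable ?PJ Y\<close>] by (auto simp: A'_def space_pair_measure space_PiM)
    then show "prob {\<omega>\<in>space M. (f, Y \<omega>) \<in> A'} \<le> \<delta>" using sections[of "f i"] by (simp add: Y_def)
  qed
  finally show ?thesis by (simp add: Y_def)
qed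

lemma le_at_left_limit_of_Rats:
  fixes h :: "real \<Rightarrow> real"
  assumes lim: "(h \<longlongrightarrow> h r) (at_left r)" and le: "\<And>q. q \<in> \<rat> \<Longrightarrow> h q \<le> c"
  shows "h r \<le> c"
proof (rule ccontr)
  assume "\<not> h r \<le> c"
  then have "eventually (\<lambda>s. c < h s) (at_left r)" using lim order_tendstoD(1) by force
  then obtain b where "b < r" and b: "\<And>s. b < s \<Longrightarrow> s < r \<Longrightarrow> c < h s"
    unfolding eventually_at_left_field by blast
  obtain q where "q \<in> \<rat>" "b < q" "q < r" using Rats_dense_in_real[OF \<open>b < r\<close>] by blast
  then show False using b le by force
qed

text \<open>\<open>G r\<close> plays the role of the relation \<open>d x y < r\<close>.\<close>

locale nested_neighbourhoods = prob_space \<mu> for \<mu> :: "'a measure" +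
  fixes G :: "real \<Rightarrow> ('a \<times> 'a) set"
  assumes sets_G: "G r \<in> sets (\<mu> \<Otimes>\<^sub>M \<mu>)"
    and mono_G: "r \<le> r' \<Longrightarrow> G r \<subseteq> G r'"
    and left_open_G: "p \<in> G r \<Longrightarrow> \<exists>s<r. p \<in> G s"
    and refl_G: "x \<in> space \<mu> \<Longrightarrow> r > 0 \<Longrightarrow> (x, x) \<in> G r"
begin

lemma left_open_chain_section: "left_open_chain \<mu> (\<lambda>r. Pair x -` G r)"
  by unfold_locales (use sets_Pair1[OF sets_G] mono_G left_open_G in blast)+

lemma sets_rational_deviation:
  assumes "finite J"
  shows "{p \<in> space (\<mu> \<Otimes>\<^sub>M PiM J (\<lambda>_. \<mu>)). \<exists>r\<in>\<rat>.
      \<epsilon> < \<bar>sqrt ((1 + hits (\<lambda>j y. y j) J (Pair (fst p) -` G r) (snd p)) / c)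
        - sqrt (measure \<mu> (Pair (fst p) -` G r))\<bar>} \<in> sets (\<mu> \<Otimes>\<^sub>M PiM J (\<lambda>_. \<mu>))"
proof -
  let ?S = "\<mu> \<Otimes>\<^sub>M PiM J (\<lambda>_. \<mu>)"
  have hits: "hits (\<lambda>j y. y j) J (Pair x -` G r) y = (\<Sum>j\<in>J. indicator (G r) (x, y j))" for x y r
    by (simp add: hits_eq_sum_indicator[OF assms] indicator_def)
  have "(\<lambda>p. \<Sum>j\<in>J. indicator (G r) (fst p, snd p j) :: real) \<in> borel_measurable ?S" for r
  proof (intro borel_measurable_sum)
    fix j assume "j \<in> J"
    then have "(\<lambda>p. (fst p, snd p j)) \<in> measurable ?S (\<mu> \<Otimes>\<^sub>M \<mu>)" by measurable
    then show "(\<lambda>p. indicator (G r) (fst p, snd p j) :: real) \<in> borel_measurable ?S"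
      using sets_G by measurable
  qed
  moreover have "(\<lambda>p. measure \<mu> (Pair (fst p) -` G r)) \<in> borel_measurable ?S" for r
    unfolding measure_def
    by (intro measurable_compose[OF measurable_fst] borel_measurable_enn2real measurable_emeasure_Pair sets_G)
  ultimately have "(\<lambda>p. \<bar>sqrt ((1 + hits (\<lambda>j y. y j) J (Pair (fst p) -` G r) (snd p)) / c)
      - sqrt (measure \<mu> (Pair (fst p) -` G r))\<bar>) \<in> borel_measurable ?S" for r
    unfolding hits by measurable
  then show ?thesis
    by (intro sets.sets_Collect_countable_Ex' borel_measurable_less borel_measurable_const)
      (auto intro: countable_rat)
qed

text \<open>Conditionally on \<open>X i\<close>, the other \<open>n - 1\<close> points are an i.i.d. sample, to which the uniform
  bound applies with \<open>K = n\<close>; the point \<open>X i\<close> itself accounts for the shift by \<open>1\<close>. Rational radii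
  keep the event measurable.\<close>

lemma bad_event_for_sample_point:
  fixes P :: "'w measure" and X :: "nat \<Rightarrow> 'w \<Rightarrow> 'a"
  assumes "prob_space P" and X_distr: "\<And>j. j < n \<Longrightarrow> distr P \<mu> (X j) = \<mu>"
    and X_indep: "prob_space.indep_vars P (\<lambda>_. \<mu>) X {..<n}" and "i < n" "2 \<le> n" "t > 0"
  defines "J \<equiv> {..<n} - {i}"
  defines "Bad \<equiv> {\<omega>\<in>space P. \<exists>r\<in>\<rat>. t + 2 * sqrt (1 / n)
      < \<bar>sqrt ((1 + hits X J (Pair (X i \<omega>) -` G r) \<omega>) / n) - sqrt (measure \<mu> (Pair (X i \<omega>) -` G r))\<bar>}"
  shows "Bad \<in> sets P" "measure P Bad \<le> 2 * (real n + 1) * exp (- real (n - 1) * t\<^sup>2)"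
proof -
  interpret P: prob_space P by fact
  have "finite J" "J \<subseteq> {..<n}" "card J = n - 1" using \<open>i < n\<close> by (auto simp: J_def)
  then have "J \<noteq> {}" using \<open>2 \<le> n\<close> by auto
  interpret iid_family P \<mu> X J
    using \<open>finite J\<close> P.indep_vars_subset[OF X_indep \<open>J \<subseteq> {..<n}\<close>] X_distr \<open>J \<subseteq> {..<n}\<close>
    by unfold_locales auto
  have X: "X j \<in> measurable P \<mu>" if "j < n" for j
    using X_indep that unfolding P.indep_vars_def2 by blast
  define A where "A = {p \<in> space (\<mu> \<Otimes>\<^sub>M PiM J (\<lambda>_. \<mu>)). \<exists>r\<in>\<rat>. t + 2 * sqrt (1 / n)
      < \<bar>sqrt ((1 + hits (\<lambda>j y. y j) J (Pair (fst p) -` G r) (snd p)) / n)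
        - sqrt (measure \<mu> (Pair (fst p) -` G r))\<bar>}"
  have A: "A \<in> sets (\<mu> \<Otimes>\<^sub>M PiM J (\<lambda>_. \<mu>))" unfolding A_def using \<open>finite J\<close> by (rule sets_rational_deviation)
  have hits_restrict: "hits (\<lambda>j y. y j) J C (restrict (\<lambda>j. X j \<omega>) J) = hits X J C \<omega>" for C \<omega>
    unfolding hits_def by (auto intro!: arg_cong[where f=card])
  have Y: "(\<lambda>\<omega>. restrict (\<lambda>j. X j \<omega>) J) \<in> measurable P (PiM J (\<lambda>_. \<mu>))"
    using X \<open>J \<subseteq> {..<n}\<close> by (intro measurable_restrict) auto
  then have Bad: "Bad = {\<omega>\<in>space P. (X i \<omega>, restrict (\<lambda>j. X j \<omega>) J) \<in> A}"
    using measurable_space[OF X[OF \<open>i < n\<close>]] measurable_space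
    by (auto simp: Bad_def A_def hits_restrict space_pair_measure)
  also have "\<dots> \<in> sets P"
    using X[OF \<open>i < n\<close>] Y A by measurable
  finally show "Bad \<in> sets P" .
  have "measure P {\<omega>\<in>space P. (X i \<omega>, restrict (\<lambda>j. X j \<omega>) J) \<in> A} \<le> 2 * (real n + 1) * exp (- real (card J) * t\<^sup>2)"
  proof (rule P.prob_indep_vars_component_le[OF X_indep _ _ A])
    fix x assume "x \<in> space \<mu>"
    have "{\<omega>\<in>space P. (x, restrict (\<lambda>j. X j \<omega>) J) \<in> A} \<in> sets P"
      using Y A \<open>x \<in> space \<mu>\<close> by measurable
    moreover have "{\<omega>\<in>space P. (x, restrict (\<lambda>j. X j \<omega>) J) \<in> A} \<subseteq> {\<omega>\<in>space P. \<exists>r.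
        \<bar>sqrt ((1 + hits X J (Pair x -` G r) \<omega>) / (real (card J) + 1)) - sqrt (measure \<mu> (Pair x -` G r))\<bar>
          > t + sqrt (1 / n) + sqrt (1 / (real (card J) + 1))}"
      using \<open>card J = n - 1\<close> \<open>2 \<le> n\<close> by (auto simp: A_def hits_restrict of_nat_diff add.commute)
    ultimately show "measure P {\<omega>\<in>space P. (x, restrict (\<lambda>j. X j \<omega>) J) \<in> A}
        \<le> 2 * (real n + 1) * exp (- real (card J) * t\<^sup>2)"
      using \<open>t > 0\<close> \<open>2 \<le> n\<close> \<open>J \<noteq> {}\<close>
      by (intro uniform_sqrt_hits_deviation[OF left_open_chain_section]) auto
  qed (use \<open>i < n\<close> in \<open>auto simp: J_def\<close>)
  then show "measure P Bad \<le> 2 * (real n + 1) * exp (- real (n - 1) * t\<^sup>2)"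
    by (simp add: Bad \<open>card J = n - 1\<close>)
qed

end

lemma emp_measure_nonneg: "0 \<le> emp_measure n X \<omega> W"
  by (simp add: emp_measure_def)

lemma emp_measure_le_1: "emp_measure n X \<omega> W \<le> 1"
proof -
  have "{j \<in> {..<n}. X j \<omega> \<in> W} \<subseteq> {..<n}" by blast
  then have "card {j \<in> {..<n}. X j \<omega> \<in> W} \<le> n" using card_mono[OF finite_lessThan] by fastforce
  then show ?thesis by (cases "n = 0") (auto simp: emp_measure_def divide_le_eq_1)
qed

lemma sqrt_diff_abs_le_1:
  fixes a b :: real
  assumes "0 \<le> a" "a \<le> 1" "0 \<le> b" "b \<le> 1"
  shows "\<bar>sqrt a - sqrt b\<bar> \<le> 1"
proof -
  have "0 \<le> sqrt a" "sqrt a \<le> 1" "0 \<le> sqrt b" "sqrt b \<le> 1" using assms by auto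
  then show ?thesis unfolding abs_le_iff by linarith
qed

lemma (in prob_space) prob_compl_UN_ge:
  assumes "finite I" "\<And>i. i \<in> I \<Longrightarrow> A i \<in> events" "\<And>i. i \<in> I \<Longrightarrow> prob (A i) \<le> \<delta>"
    and "real (card I) * \<delta> \<le> p"
  shows "1 - p \<le> prob (space M - (\<Union>i\<in>I. A i))"
proof -
  have "prob (\<Union>i\<in>I. A i) \<le> (\<Sum>i\<in>I. prob (A i))"
    using assms(1,2) by (intro finite_measure_subadditive_finite) auto
  also have "\<dots> \<le> real (card I) * \<delta>" using sum_mono[of I _ "\<lambda>_. \<delta>"] assms(3) by simp
  finally show ?thesis
    using assms(1,2,4) by (subst prob_compl) auto
qed

lemma emp_measure_eq_shifted_hits:
  assumes "i < n" "X i \<omega> \<in> W"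
  shows "emp_measure n X \<omega> W = (1 + hits X ({..<n} - {i}) W \<omega>) / n"
proof -
  have "{j \<in> {..<n}. X j \<omega> \<in> W} = insert i {j \<in> {..<n} - {i}. X j \<omega> \<in> W}" using assms by auto
  then show ?thesis by (simp add: emp_measure_def hits_def)
qed

lemma exp_nat_le_three_pow: "exp (real k) \<le> 3 ^ k"
proof -
  have "exp (real k) = exp 1 ^ k" by (simp add: exp_of_nat_mult[symmetric])
  also have "\<dots> \<le> 3 ^ k" by (intro power_mono exp_le) auto
  finally show ?thesis .
qed

lemma deviation_level_large:
  fixes n :: nat and p2 L :: real
  assumes "0 < p2" "p2 \<le> 1/2" "4 \<le> n" and L: "L = - ln (p2 / (4 * real n ^ 2))" and "4 * L < n"
  shows "5 \<le> L" "17 \<le> n"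
proof -
  have "n > 0" using \<open>4 \<le> n\<close> by simp
  have "(2 * p2) * real n ^ 2 \<le> 1 * real n ^ 2"
    using \<open>p2 \<le> 1/2\<close> by (intro mult_right_mono) auto
  then have "8 * real n ^ 2 \<le> 4 * real n ^ 2 / p2"
    using \<open>0 < p2\<close> by (simp add: field_simps)
  moreover have "L = ln (4 * real n ^ 2 / p2)"
    unfolding L using \<open>0 < p2\<close> \<open>n > 0\<close> by (simp add: ln_div)
  ultimately have L_ge: "ln (8 * real n ^ 2) \<le> L"
    using \<open>n > 0\<close> \<open>0 < p2\<close> by simp
  have "exp (real 4) \<le> 8 * real n ^ 2"
    using exp_nat_le_three_pow[of 4] power_mono[of 4 "real n" 2] \<open>4 \<le> n\<close> by simp
  then have "4 \<le> ln (8 * real n ^ 2)" using \<open>n > 0\<close> by (subst ln_ge_iff) auto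
  then have "4 \<le> L" using L_ge by linarith
  then show "17 \<le> n" using \<open>4 * L < n\<close> by linarith
  then have "exp (real 5) \<le> 8 * real n ^ 2"
    using exp_nat_le_three_pow[of 5] power_mono[of 17 "real n" 2] by simp
  then have "5 \<le> ln (8 * real n ^ 2)" using \<open>n > 0\<close> by (subst ln_ge_iff) auto
  then show "5 \<le> L" using L_ge by linarith
qed

lemma deviation_radius_sufficient:
  fixes y :: real
  assumes "11/5 \<le> y" "17 \<le> n"
  shows "y\<^sup>2 \<le> (real n - 1) * (2 * (y - 1) / sqrt n)\<^sup>2"
proof -
  have "17 * y\<^sup>2 \<le> 64 * (y - 1)\<^sup>2"
  proof -
    have "64 * (y - 1)\<^sup>2 - 17 * y\<^sup>2 = 47 * (y - 11/5)\<^sup>2 + 394/5 * (y - 11/5) + 247/25"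
      by (simp add: power2_eq_square field_simps)
    moreover have "0 \<le> 394/5 * (y - 11/5)" using assms(1) by simp
    ultimately show ?thesis using zero_le_power2[of "y - 11/5"] by linarith
  qed
  then have "(real n - 1) * (17 * y\<^sup>2) \<le> (real n - 1) * (64 * (y - 1)\<^sup>2)"
    using assms(2) by (intro mult_left_mono) auto
  moreover have "(real n * 16) * y\<^sup>2 \<le> ((real n - 1) * 17) * y\<^sup>2"
    using assms(2) by (intro mult_right_mono) auto
  ultimately have "real n * y\<^sup>2 \<le> (real n - 1) * (4 * (y - 1)\<^sup>2)"
    by (simp add: algebra_simps)
  moreover have "(2 * (y - 1) / sqrt n)\<^sup>2 = 4 * (y - 1)\<^sup>2 / n"
    using assms(2) by (simp add: power_divide power_mult_distrib power2_eq_square algebra_simps)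
  ultimately show ?thesis
    using assms(2) by (simp add: field_simps)
qed

text \<open>Of the admissible deviation \<open>2 sqrt (L / n)\<close>, the grid with \<open>K = n\<close> and the point \<open>X i\<close>
  itself use up \<open>sqrt (1 / n)\<close> each; the rest \<open>t\<close> must make \<open>n\<close> times the bound of
  \<open>bad_event_for_sample_point\<close> at most \<open>p2\<close>.\<close>

lemma union_bound_parameters:
  fixes n :: nat and p2 L :: real
  assumes "0 < p2" "p2 \<le> 1/2" "4 \<le> n" and L: "L = - ln (p2 / (4 * real n ^ 2))"
    and small: "2 * sqrt (L / n) < 1"
  defines "t \<equiv> 2 * sqrt (L / n) - 2 * sqrt (1 / n)"
  shows "t > 0" "real n * (2 * (real n + 1) * exp (- real (n - 1) * t\<^sup>2)) \<le> p2"
proof -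
  have "n > 0" using \<open>4 \<le> n\<close> by simp
  have "1 \<le> real n ^ 2" using \<open>n > 0\<close> by simp
  then have "p2 \<le> 4 * real n ^ 2" using \<open>p2 \<le> 1/2\<close> by linarith
  then have "L \<ge> 0" using L \<open>0 < p2\<close> by (simp add: ln_div)
  have "(2 * sqrt (L / n))\<^sup>2 < 1\<^sup>2" using small \<open>L \<ge> 0\<close> by (intro power_strict_mono) auto
  then have "4 * (L / n) < 1" using \<open>L \<ge> 0\<close> by (simp add: power_mult_distrib)
  then have "4 * L < n" using \<open>n > 0\<close> by (simp add: field_simps)
  then have "5 \<le> L" "17 \<le> n" using deviation_level_large[OF assms(1-4)] by auto
  have t: "t = 2 * (sqrt L - 1) / sqrt n"
    unfolding t_def by (simp add: real_sqrt_divide diff_divide_distrib)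
  have "11/5 \<le> sqrt L"
    using \<open>5 \<le> L\<close> by (intro real_le_rsqrt) (simp add: power2_eq_square)
  then show "t > 0" unfolding t using \<open>n > 0\<close> \<open>5 \<le> L\<close> by (intro divide_pos_pos) auto
  have "L \<le> real (n - 1) * t\<^sup>2"
    using deviation_radius_sufficient[OF \<open>11/5 \<le> sqrt L\<close> \<open>17 \<le> n\<close>] \<open>L \<ge> 0\<close> \<open>n > 0\<close>
    unfolding t by (simp add: of_nat_diff)
  then have "exp (- real (n - 1) * t\<^sup>2) \<le> exp (- L)" by simp
  also have "exp (- L) = p2 / (4 * real n ^ 2)" using \<open>0 < p2\<close> \<open>n > 0\<close> by (simp add: L)
  finally have "exp (- real (n - 1) * t\<^sup>2) \<le> p2 / (4 * real n ^ 2)" .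
  then have "real n * (2 * (real n + 1) * exp (- real (n - 1) * t\<^sup>2))
      \<le> real n * (2 * (real n + 1) * (p2 / (4 * real n ^ 2)))"
    by (intro mult_left_mono) auto
  also have "\<dots> = p2 * ((real n + 1) / (2 * real n))"
    using \<open>n > 0\<close> by (simp add: field_simps power2_eq_square)
  also have "\<dots> \<le> p2" using \<open>0 < p2\<close> \<open>n > 0\<close> by (intro mult_left_le) auto
  finally show "real n * (2 * (real n + 1) * exp (- real (n - 1) * t\<^sup>2)) \<le> p2" .
qed

context nested_neighbourhoods
begin

text \<open>Counts and measures of the balls are continuous from the left in the radius, so a bound at
  all rational radii holds at every radius.\<close>

lemma deviation_le_of_rational_radii:
  assumes "i < n" "x \<in> space \<mu>" "r > 0" "X i \<omega> = x"
    and le: "\<And>q. q \<in> \<rat> \<Longrightarrow> \<bar>sqrt ((1 + hits X ({..<n} - {i}) (Pair x -` G q) \<omega>) / n)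
      - sqrt (measure \<mu> (Pair x -` G q))\<bar> \<le> c"
  shows "\<bar>sqrt (emp_measure n X \<omega> (Pair x -` G r)) - sqrt (measure \<mu> (Pair x -` G r))\<bar> \<le> c"
proof -
  interpret B: left_open_chain \<mu> "\<lambda>r. Pair x -` G r" by (rule left_open_chain_section)
  define h where "h s = \<bar>sqrt ((1 + hits X ({..<n} - {i}) (Pair x -` G s) \<omega>) / n)
    - sqrt (measure \<mu> (Pair x -` G s))\<bar>" for s
  have "eventually (\<lambda>s. hits X ({..<n} - {i}) (Pair x -` G s) \<omega> = hits X ({..<n} - {i}) (Pair x -` G r) \<omega>) (at_left r)"
    by (rule B.hits_B_eventually_at_left) simp
  then have "((\<lambda>s. hits X ({..<n} - {i}) (Pair x -` G s) \<omega>) \<longlongrightarrow> hits X ({..<n} - {i}) (Pair x -` G r) \<omega>) (at_left r)"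
    by (rule tendsto_eventually)
  then have "(h \<longlongrightarrow> h r) (at_left r)"
    unfolding h_def using \<open>i < n\<close> by (intro tendsto_intros B.measure_B_at_left) auto
  then have "h r \<le> c" by (rule le_at_left_limit_of_Rats) (use le in \<open>simp add: h_def\<close>)
  moreover have "(x, x) \<in> G r" using refl_G \<open>x \<in> space \<mu>\<close> \<open>r > 0\<close> by blast
  ultimately show ?thesis
    using \<open>i < n\<close> \<open>X i \<omega> = x\<close> by (simp add: h_def emp_measure_eq_shifted_hits)
qed

theorem iid_neighbourhood_concentration:
  fixes P :: "'w measure" and X :: "nat \<Rightarrow> 'w \<Rightarrow> 'a" and n :: nat and p2 :: real
  assumes "prob_space P" and distr_X: "\<And>j. j < n \<Longrightarrow> distr P \<mu> (X j) = \<mu>"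
    and indep_X: "prob_space.indep_vars P (\<lambda>_. \<mu>) X {..<n}" and p2: "0 < p2" "p2 \<le> 1/2" and "4 \<le> n"
  shows "\<exists>E\<in>sets P. 1 - p2 \<le> measure P E \<and> (\<forall>\<omega>\<in>E. \<forall>i<n. \<forall>r>0.
    \<bar>sqrt (emp_measure n X \<omega> (Pair (X i \<omega>) -` G r)) - sqrt (measure \<mu> (Pair (X i \<omega>) -` G r))\<bar>
      \<le> 2 * sqrt (- ln (p2 / (4 * real n ^ 2)) / real n))"
proof -
  interpret P: prob_space P by fact
  define L where "L = - ln (p2 / (4 * real n ^ 2))"
  show ?thesis
  proof (cases "2 * sqrt (L / n) < 1")
    case False
    then have "\<bar>sqrt (emp_measure n X \<omega> (Pair (X i \<omega>) -` G r)) - sqrt (measure \<mu> (Pair (X i \<omega>) -` G r))\<bar>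
        \<le> 2 * sqrt (L / n)" for \<omega> i r
      using sqrt_diff_abs_le_1[OF emp_measure_nonneg emp_measure_le_1 measure_nonneg prob_le_1,
          of n X \<omega> "Pair (X i \<omega>) -` G r" "Pair (X i \<omega>) -` G r"] by linarith
    moreover have "1 - p2 \<le> measure P (space P)" using p2 by (simp add: P.prob_space)
    ultimately show ?thesis unfolding L_def[symmetric] by blast
  next
    case True
    define t where "t = 2 * sqrt (L / n) - 2 * sqrt (1 / n)"
    note t = union_bound_parameters[OF p2 \<open>4 \<le> n\<close> L_def True, folded t_def]
    define Bad where "Bad i = {\<omega>\<in>space P. \<exists>r\<in>\<rat>. t + 2 * sqrt (1 / n) < \<bar>sqrt ((1
      + hits X ({..<n} - {i}) (Pair (X i \<omega>) -` G r) \<omega>) / n) - sqrt (measure \<mu> (Pair (X i \<omega>) -` G r))\<bar>}" for i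
    note Bad = bad_event_for_sample_point[OF \<open>prob_space P\<close> distr_X indep_X _ _ t(1), folded Bad_def]
    define E where "E = space P - (\<Union>i<n. Bad i)"
    have "E \<in> sets P" using Bad(1) \<open>4 \<le> n\<close> unfolding E_def by (intro sets.Diff sets.top sets.finite_UN) auto
    moreover have "1 - p2 \<le> measure P E"
      unfolding E_def using Bad t(2) \<open>4 \<le> n\<close>
      by (intro P.prob_compl_UN_ge[where \<delta> = "2 * (real n + 1) * exp (- real (n - 1) * t\<^sup>2)"]) auto
    moreover have "\<bar>sqrt (emp_measure n X \<omega> (Pair (X i \<omega>) -` G r)) - sqrt (measure \<mu> (Pair (X i \<omega>) -` G r))\<bar>
        \<le> 2 * sqrt (L / n)" if "\<omega> \<in> E" "i < n" "r > 0" for \<omega> i r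
    proof (rule deviation_le_of_rational_radii[OF \<open>i < n\<close> _ \<open>r > 0\<close> refl])
      have "\<omega> \<in> space P" "\<omega> \<notin> Bad i" using \<open>\<omega> \<in> E\<close> \<open>i < n\<close> by (auto simp: E_def)
      have "X i \<in> measurable P \<mu>" using indep_X \<open>i < n\<close> unfolding P.indep_vars_def2 by blast
      then show "X i \<omega> \<in> space \<mu>" using \<open>\<omega> \<in> space P\<close> by (rule measurable_space)
      fix q :: real assume "q \<in> \<rat>"
      with \<open>\<omega> \<in> space P\<close> \<open>\<omega> \<notin> Bad i\<close> have "\<not> t + 2 * sqrt (1 / n) < \<bar>sqrt ((1
        + hits X ({..<n} - {i}) (Pair (X i \<omega>) -` G q) \<omega>) / n) - sqrt (measure \<mu> (Pair (X i \<omega>) -` G q))\<bar>"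
        unfolding Bad_def by blast
      then show "\<bar>sqrt ((1 + hits X ({..<n} - {i}) (Pair (X i \<omega>) -` G q) \<omega>) / n)
        - sqrt (measure \<mu> (Pair (X i \<omega>) -` G q))\<bar> \<le> 2 * sqrt (L / n)"
        unfolding t_def by linarith
    qed
    ultimately show ?thesis unfolding L_def[symmetric] by blast
  qed
qed

end

lemma nested_neighbourhoods_geodesic_ball_rel:
  fixes M :: "'a::euclidean_space set"
  assumes "submanifold M" "prob_space \<mu>" "space \<mu> = M" "sets \<mu> = sets (restrict_space borel M)"
  shows "nested_neighbourhoods \<mu> (geodesic_ball_rel M)"
proof (rule nested_neighbourhoods.intro[OF assms(2)], unfold_locales)
  show "geodesic_ball_rel M r \<in> sets (\<mu> \<Otimes>\<^sub>M \<mu>)" for r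
    by (rule geodesic_ball_rel_in_sets[OF assms(1,3,4)])
  show "geodesic_ball_rel M r \<subseteq> geodesic_ball_rel M r'" if "r \<le> r'" for r r'
    using that by (rule geodesic_ball_rel_mono)
  show "\<exists>s<r. p \<in> geodesic_ball_rel M s" if "p \<in> geodesic_ball_rel M r" for p r
    using that by (rule geodesic_ball_rel_left_open)
  show "(x, x) \<in> geodesic_ball_rel M r" if "x \<in> space \<mu>" "0 < r" for x r
    using that assms(3) by (simp add: geodesic_ball_rel_refl)
qed

theorem mainTheorem9:
  fixes M :: "'a::euclidean_space set"
    and \<mu> :: "'a measure"
    and P :: "'w measure"
    and X :: "nat \<Rightarrow> 'w \<Rightarrow> 'a"
    and n :: nat and p2 :: real
  assumes "submanifold M"
    and "prob_space \<mu>" and "space \<mu> = M" and "sets \<mu> = sets (restrict_space borel M)"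
    and "prob_space P"
    and "\<And>j. j < n \<Longrightarrow> X j \<in> measurable P \<mu>"
    and "\<And>j. j < n \<Longrightarrow> distr P \<mu> (X j) = \<mu>"
    and "prob_space.indep_vars P (\<lambda>_. \<mu>) X {..<n}"
    and "0 < p2" and "p2 \<le> 1/2" and "n \<ge> 4"
  shows "\<exists>E \<in> sets P. measure P E \<ge> 1 - p2 \<and>
     (\<forall>\<omega>\<in>E. \<forall>i<n. \<forall>r>0.
        \<bar>sqrt (emp_measure n X \<omega> (geodesic_ball M (X i \<omega>) r))
          - sqrt (measure \<mu> (geodesic_ball M (X i \<omega>) r))\<bar>
        \<le> 2 * sqrt (- ln (p2 / (4 * real n ^ 2)) / real n))"
proof -
  interpret nested_neighbourhoods \<mu> "geodesic_ball_rel M"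
    using assms(1-4) by (rule nested_neighbourhoods_geodesic_ball_rel)
  obtain E where "E \<in> sets P" "1 - p2 \<le> measure P E" and E: "\<forall>\<omega>\<in>E. \<forall>i<n. \<forall>r>0.
    \<bar>sqrt (emp_measure n X \<omega> (Pair (X i \<omega>) -` geodesic_ball_rel M r))
      - sqrt (measure \<mu> (Pair (X i \<omega>) -` geodesic_ball_rel M r))\<bar> \<le> 2 * sqrt (- ln (p2 / (4 * real n ^ 2)) / real n)"
    using iid_neighbourhood_concentration[OF assms(5,7,8,9,10,11)] by blast
  show ?thesis
  proof (intro bexI[of _ E] conjI ballI allI impI)
    fix \<omega> i and r :: real assume "\<omega> \<in> E" "i < n" "0 < r"
    then have "X i \<omega> \<in> M"
      using measurable_space[OF assms(6)] sets.sets_into_space[OF \<open>E \<in> sets P\<close>] assms(3) by blast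
    then show "\<bar>sqrt (emp_measure n X \<omega> (geodesic_ball M (X i \<omega>) r))
          - sqrt (measure \<mu> (geodesic_ball M (X i \<omega>) r))\<bar> \<le> 2 * sqrt (- ln (p2 / (4 * real n ^ 2)) / real n)"
      using E \<open>\<omega> \<in> E\<close> \<open>i < n\<close> \<open>0 < r\<close> by (simp add: geodesic_ball_eq_section)
  qed fact+
qed

end
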